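(* Let $1/3<\kappa<\gamma<1/2$, assume hypothesis (H), let $I=[a,b]\subset[0,T]$, $\varepsilon=b-a$, and let $z\in\mathcal A^\kappa_{f,h}(I;\mathbb R^n)$. Let $\tilde z$ be defined by $\tilde z_a=\tilde h\in\mathcal L_1$ and $\tilde\delta\tilde z=\mathcal J(\tilde dx\,z)$. Then $$\mathcal N[\tilde z;\tilde{\mathcal Q}^\kappa(I)]\le c_x\{\mathcal N[z;\mathcal C_1^0(I)]+\varepsilon^{\gamma-\kappa}\mathcal M[z;\mathcal A^\kappa_{f,h}(I)]+\varepsilon^{1-\kappa}\mathcal N[f;\mathcal C_2^1(I)]\}.$$
   Context: Measurable $\hat\phi:(0,\infty)\to\mathbb R$ and $T>0$ fixed. $\mathcal L_1(V)$: measurable $g$ with $\mathcal N[g;\mathcal L_1]=\int_0^\infty|\hat\phi(\xi)|(1+\xi)\|g(\xi)\|d\xi<\infty$. $\tilde{\mathcal C}_k(I;V)$: continuous maps from $\{t_1\ge\dots\ge t_k\}\subset I^k$ to $\mathcal L_1(V)$. $(\tilde\delta f)_{ts}(\xi)=f_t(\xi)-e^{-\xi(t-s)}f_s(\xi)$, $(\tilde\delta B)_{tus}(\xi)=B_{ts}-B_{tu}-e^{-\xi(t-u)}B_{us}$. $\mathcal N[B;\tilde{\mathcal C}^\mu_2]=\sup_{s<t}\mathcal N[B_{ts};\mathcal L_1]/|t-s|^\mu$; $\mathcal N[h;\tilde{\mathcal C}^\mu_3]=\inf\sum_i\sup_{s<u<t}\mathcal N[h^i_{tus};\mathcal L_1]|t-u|^{-\rho_i}|u-s|^{-(\mu-\rho_i)}$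 over $h=\sum_ih^i$, $\rho_i\in(0,\mu)$; $\mathcal N[f;\tilde{\mathcal C}^\mu_1]=\mathcal N[\tilde\delta f;\tilde{\mathcal C}^\mu_2]$. Paths: $\mathcal N[z;\mathcal C_1^0]=\sup\|z_s\|$, $\mathcal N[z;\mathcal C_1^\mu]=\sup\|z_t-z_s\|/|t-s|^\mu$, $\mathcal N[r;\mathcal C_2^\mu]=\sup\|r_{ts}\|/|t-s|^\mu$. $A\cdot B=\mathrm{Tr}(AB^* )$, $(u\otimes v)_{ij}=u_iv_j$. $\tilde\Lambda$: for $\mu>1$ and $h\in\tilde{\mathcal C}^\mu_3\cap\tilde\delta(\tilde{\mathcal C}_2)$, $\tilde\Lambda h$ is the unique element of $\tilde{\mathcal C}_2^\mu$ with $\tilde\delta\tilde\Lambda h=h$. Hypothesis (H): $\tilde x^1\in\tilde{\mathcal C}_2^\gamma([0,T];\mathbb R^{1,n})$, $\tilde x^2\in\tilde{\mathcal C}_2^{2\gamma}([0,T];\mathbb R^{n,n})$, $\tilde x^3\in\tilde{\mathcal C}_3^{3\gamma}([0,T];\mathbb R^{n,n})$, $\tilde\delta\tilde x^1=0$, $(\tilde\delta\tilde x^2)_{tus}=\tilde x^1_{tu}\otimes x^1_{us}+\tilde x^3_{tus}$, $x^1_{ts}=\int_0^\infty\tilde x^1_{ts}(\xi)\hat\phi(\xi)d\xi$. $\mathcal A^\kappa_{f,h}(I;\mathbb R^n)$ ($f$ with $\mathcal N[f;\mathcal C_2^1]<\infty$, $h\in\mathbb R^n$): $\gamma$-Hölder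 $z$ with $z_a=h$ and $(\delta z)_{ts}-f_{ts}=(x^1_{ts}\zeta^z_s)^*+r^z_{ts}$, $\zeta^z\in\mathcal C_1^\kappa(I;\mathbb R^{n,n})$, $r^z\in\mathcal C_2^{2\kappa}$; $\mathcal M[z;\mathcal A^\kappa_{f,h}]=\mathcal N[\zeta^z;\mathcal C_1^0]+\mathcal N[\zeta^z;\mathcal C_1^\kappa]+\mathcal N[r^z;\mathcal C_2^{2\kappa}]+\mathcal N[z;\mathcal C_1^\kappa]$. The integral is $\mathcal J_{ts}(\tilde dx\,z)=\tilde x^1_{ts}z_s+\tilde x^2_{ts}\cdot(\zeta^z_s)^*+\tilde\Lambda(H)_{ts}$ with $H_{tus}=\tilde x^1_{tu}(r^z_{us}+f_{us})+\tilde x^2_{tu}\cdot(\zeta^z_u-\zeta^z_s)^*-\tilde x^3_{tus}\cdot(\zeta^z_s)^*$. $\tilde{\mathcal Q}^\kappa(I;\mathbb R)$: $\tilde y\in\tilde{\mathcal C}_1$ with $(\tilde\delta\tilde y)_{ts}=(\tilde x^1_{ts}\zeta_s)^*+\tilde r_{ts}$, $\zeta\in\mathcal C_1^\kappa(\mathbb R^{n,1})$, $\tilde r\in\tilde{\mathcal C}^{2\kappa}_2$; norm $\mathcal N[\tilde y;\tilde{\mathcal C}_1^\kappa]+\mathcal N[\zeta;\mathcal C_1^0]+\mathcal N[\zeta;\mathcal C_1^\kappa]+\mathcal N[\tilde r;\tilde{\mathcal C}^{2\kappa}_2]$; here $\tilde z$ is decomposed with $\zeta=z$. *)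

theory Defs
  imports "HOL-Analysis.Analysis"
begin

(* Functions of xi are defined on all reals; only xi in (0,oo) matters. *)

definition L1N :: "(real \<Rightarrow> real) \<Rightarrow> (real \<Rightarrow> 'v::real_normed_vector) \<Rightarrow> ennreal" where
  "L1N \<phi> g = (\<integral>\<^sup>+ \<xi> \<in> {0<..}. ennreal (\<bar>\<phi> \<xi>\<bar> * (1 + \<xi>) * norm (g \<xi>)) \<partial>lborel)"

definition inL1 :: "(real \<Rightarrow> real) \<Rightarrow> (real \<Rightarrow> 'v::real_normed_vector) \<Rightarrow> bool" where
  "inL1 \<phi> g \<longleftrightarrow> set_borel_measurable lborel {0<..} g \<and> L1N \<phi> g < \<infinity>"

definition tdelta1 :: "(real \<Rightarrow> real \<Rightarrow> 'v::real_vector) \<Rightarrow> real \<Rightarrow> real \<Rightarrow> real \<Rightarrow> 'v" where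
  "tdelta1 y t s \<xi> = y t \<xi> - exp (- \<xi> * (t - s)) *\<^sub>R y s \<xi>"

definition tdelta2 :: "(real \<Rightarrow> real \<Rightarrow> real \<Rightarrow> 'v::real_vector) \<Rightarrow> real \<Rightarrow> real \<Rightarrow> real \<Rightarrow> real \<Rightarrow> 'v" where
  "tdelta2 B t u s \<xi> = B t s \<xi> - B t u \<xi> - exp (- \<xi> * (t - u)) *\<^sub>R B u s \<xi>"

definition cont2 :: "(real \<Rightarrow> real) \<Rightarrow> real set \<Rightarrow> (real \<Rightarrow> real \<Rightarrow> real \<Rightarrow> 'v::real_normed_vector) \<Rightarrow> bool" where
  "cont2 \<phi> I B \<longleftrightarrow>
     (\<forall>t\<in>I. \<forall>s\<in>I. s \<le> t \<longrightarrow> inL1 \<phi> (B t s)) \<and>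
     (\<forall>t\<in>I. \<forall>s\<in>I. s \<le> t \<longrightarrow> (\<forall>e>0. \<exists>d>0. \<forall>t'\<in>I. \<forall>s'\<in>I. s' \<le> t' \<longrightarrow>
        \<bar>t' - t\<bar> < d \<longrightarrow> \<bar>s' - s\<bar> < d \<longrightarrow> L1N \<phi> (\<lambda>\<xi>. B t' s' \<xi> - B t s \<xi>) < ennreal e))"

definition cont3 :: "(real \<Rightarrow> real) \<Rightarrow> real set \<Rightarrow> (real \<Rightarrow> real \<Rightarrow> real \<Rightarrow> real \<Rightarrow> 'v::real_normed_vector) \<Rightarrow> bool" where
  "cont3 \<phi> I h \<longleftrightarrow>
     (\<forall>t\<in>I. \<forall>u\<in>I. \<forall>s\<in>I. s \<le> u \<longrightarrow> u \<le> t \<longrightarrow> inL1 \<phi> (h t u s)) \<and>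
     (\<forall>t\<in>I. \<forall>u\<in>I. \<forall>s\<in>I. s \<le> u \<longrightarrow> u \<le> t \<longrightarrow> (\<forall>e>0. \<exists>d>0. \<forall>t'\<in>I. \<forall>u'\<in>I. \<forall>s'\<in>I.
        s' \<le> u' \<longrightarrow> u' \<le> t' \<longrightarrow> \<bar>t' - t\<bar> < d \<longrightarrow> \<bar>u' - u\<bar> < d \<longrightarrow> \<bar>s' - s\<bar> < d \<longrightarrow>
        L1N \<phi> (\<lambda>\<xi>. h t' u' s' \<xi> - h t u s \<xi>) < ennreal e))"

definition tN2 :: "(real \<Rightarrow> real) \<Rightarrow> real set \<Rightarrow> real \<Rightarrow> (real \<Rightarrow> real \<Rightarrow> real \<Rightarrow> 'v::real_normed_vector) \<Rightarrow> ennreal" where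
  "tN2 \<phi> I \<mu> B = (SUP (t, s) \<in> {(t, s). t \<in> I \<and> s \<in> I \<and> s < t}.
      L1N \<phi> (B t s) / ennreal ((t - s) powr \<mu>))"

definition tN3 :: "(real \<Rightarrow> real) \<Rightarrow> real set \<Rightarrow> real \<Rightarrow> (real \<Rightarrow> real \<Rightarrow> real \<Rightarrow> real \<Rightarrow> 'v::real_normed_vector) \<Rightarrow> ennreal" where
  "tN3 \<phi> I \<mu> h = (INF (k, hs, \<rho>) \<in> {(k, hs, \<rho>). (\<forall>i<k. 0 < \<rho> i \<and> \<rho> i < \<mu> \<and> cont3 \<phi> I (hs i)) \<and>
        (\<forall>t\<in>I. \<forall>u\<in>I. \<forall>s\<in>I. s \<le> u \<longrightarrow> u \<le> t \<longrightarrow> (\<forall>\<xi>>0. h t u s \<xi> = (\<Sum>i<k. hs i t u s \<xi>)))}.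
      (\<Sum>i<(k::nat). SUP (t, u, s) \<in> {(t, u, s). t \<in> I \<and> u \<in> I \<and> s \<in> I \<and> s < u \<and> u < t}.
          L1N \<phi> ((hs::nat \<Rightarrow> real \<Rightarrow> real \<Rightarrow> real \<Rightarrow> real \<Rightarrow> 'v) i t u s) /
            ennreal ((t - u) powr \<rho> i * (u - s) powr (\<mu> - \<rho> i))))"

definition tC2 :: "(real \<Rightarrow> real) \<Rightarrow> real set \<Rightarrow> real \<Rightarrow> (real \<Rightarrow> real \<Rightarrow> real \<Rightarrow> 'v::real_normed_vector) \<Rightarrow> bool" where
  "tC2 \<phi> I \<mu> B \<longleftrightarrow> cont2 \<phi> I B \<and> tN2 \<phi> I \<mu> B < \<infinity>"

definition tC3 :: "(real \<Rightarrow> real) \<Rightarrow> real set \<Rightarrow> real \<Rightarrow> (real \<Rightarrow> real \<Rightarrow> real \<Rightarrow> real \<Rightarrow> 'v::real_normed_vector) \<Rightarrow> bool" where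
  "tC3 \<phi> I \<mu> h \<longleftrightarrow> cont3 \<phi> I h \<and> tN3 \<phi> I \<mu> h < \<infinity>"

definition pN0 :: "real set \<Rightarrow> (real \<Rightarrow> 'v::real_normed_vector) \<Rightarrow> ennreal" where
  "pN0 I z = (SUP s \<in> I. ennreal (norm (z s)))"

definition pNhol :: "real set \<Rightarrow> real \<Rightarrow> (real \<Rightarrow> 'v::real_normed_vector) \<Rightarrow> ennreal" where
  "pNhol I \<mu> z = (SUP (t, s) \<in> {(t, s). t \<in> I \<and> s \<in> I \<and> s < t}.
      ennreal (norm (z t - z s) / (t - s) powr \<mu>))"

definition pN2 :: "real set \<Rightarrow> real \<Rightarrow> (real \<Rightarrow> real \<Rightarrow> 'v::real_normed_vector) \<Rightarrow> ennreal" where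
  "pN2 I \<mu> r = (SUP (t, s) \<in> {(t, s). t \<in> I \<and> s \<in> I \<and> s < t}.
      ennreal (norm (r t s) / (t - s) powr \<mu>))"

definition x1_of :: "(real \<Rightarrow> real) \<Rightarrow> (real \<Rightarrow> real \<Rightarrow> real \<Rightarrow> real^'n) \<Rightarrow> real \<Rightarrow> real \<Rightarrow> real^'n" where
  "x1_of \<phi> X1 t s = (LINT \<xi>:{0<..}|lborel. \<phi> \<xi> *\<^sub>R X1 t s \<xi>)"

definition outerp :: "real^'n \<Rightarrow> real^'n \<Rightarrow> real^'n^'n" where
  "outerp u v = (\<chi> i j. u $ i * v $ j)"

definition mdot :: "real^'n^'n \<Rightarrow> real^'n^'n \<Rightarrow> real" where
  "mdot A B = (\<Sum>i\<in>UNIV. \<Sum>j\<in>UNIV. A $ i $ j * B $ i $ j)"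

definition hypH :: "(real \<Rightarrow> real) \<Rightarrow> real \<Rightarrow> real \<Rightarrow> (real \<Rightarrow> real \<Rightarrow> real \<Rightarrow> real^'n)
     \<Rightarrow> (real \<Rightarrow> real \<Rightarrow> real \<Rightarrow> real^'n^'n) \<Rightarrow> (real \<Rightarrow> real \<Rightarrow> real \<Rightarrow> real \<Rightarrow> real^'n^'n) \<Rightarrow> bool" where
  "hypH \<phi> T \<gamma> X1 X2 X3 \<longleftrightarrow>
     tC2 \<phi> {0..T} \<gamma> X1 \<and> tC2 \<phi> {0..T} (2 * \<gamma>) X2 \<and> tC3 \<phi> {0..T} (3 * \<gamma>) X3 \<and>
     (\<forall>t u s. 0 \<le> s \<longrightarrow> s \<le> u \<longrightarrow> u \<le> t \<longrightarrow> t \<le> T \<longrightarrow> (\<forall>\<xi>>0. tdelta2 X1 t u s \<xi> = 0)) \<and>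
     (\<forall>t u s. 0 \<le> s \<longrightarrow> s \<le> u \<longrightarrow> u \<le> t \<longrightarrow> t \<le> T \<longrightarrow>
        (\<forall>\<xi>>0. tdelta2 X2 t u s \<xi> = outerp (X1 t u \<xi>) (x1_of \<phi> X1 u s) + X3 t u s \<xi>))"

definition inA :: "(real \<Rightarrow> real) \<Rightarrow> (real \<Rightarrow> real \<Rightarrow> real \<Rightarrow> real^'n) \<Rightarrow> real \<Rightarrow> real \<Rightarrow> real \<Rightarrow> real
     \<Rightarrow> (real \<Rightarrow> real \<Rightarrow> real^'n) \<Rightarrow> real^'n \<Rightarrow> (real \<Rightarrow> real^'n) \<Rightarrow> (real \<Rightarrow> real^'n^'n)
     \<Rightarrow> (real \<Rightarrow> real \<Rightarrow> real^'n) \<Rightarrow> bool" where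
  "inA \<phi> X1 a b \<kappa> \<gamma> f h z \<zeta> r \<longleftrightarrow>
     pNhol {a..b} \<gamma> z < \<infinity> \<and> z a = h \<and>
     (\<forall>s t. a \<le> s \<longrightarrow> s \<le> t \<longrightarrow> t \<le> b \<longrightarrow>
        z t - z s - f t s = x1_of \<phi> X1 t s v* \<zeta> s + r t s) \<and>
     pNhol {a..b} \<kappa> \<zeta> < \<infinity> \<and> pN2 {a..b} (2 * \<kappa>) r < \<infinity>"

definition MA :: "real \<Rightarrow> real \<Rightarrow> real \<Rightarrow> (real \<Rightarrow> real^'n) \<Rightarrow> (real \<Rightarrow> real^'n^'n)
     \<Rightarrow> (real \<Rightarrow> real \<Rightarrow> real^'n) \<Rightarrow> ennreal" where
  "MA a b \<kappa> z \<zeta> r = pN0 {a..b} \<zeta> + pNhol {a..b} \<kappa> \<zeta> + pN2 {a..b} (2 * \<kappa>) r + pNhol {a..b} \<kappa> z"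

definition Hterm :: "(real \<Rightarrow> real \<Rightarrow> real \<Rightarrow> real^'n) \<Rightarrow> (real \<Rightarrow> real \<Rightarrow> real \<Rightarrow> real^'n^'n)
     \<Rightarrow> (real \<Rightarrow> real \<Rightarrow> real \<Rightarrow> real \<Rightarrow> real^'n^'n) \<Rightarrow> (real \<Rightarrow> real \<Rightarrow> real^'n)
     \<Rightarrow> (real \<Rightarrow> real^'n^'n) \<Rightarrow> (real \<Rightarrow> real \<Rightarrow> real^'n) \<Rightarrow> real \<Rightarrow> real \<Rightarrow> real \<Rightarrow> real \<Rightarrow> real" where
  "Hterm X1 X2 X3 f \<zeta> r t u s \<xi> =
     X1 t u \<xi> \<bullet> (r u s + f u s) + mdot (X2 t u \<xi>) (transpose (\<zeta> u - \<zeta> s))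
     - mdot (X3 t u s \<xi>) (transpose (\<zeta> s))"

text \<open>B is (a representative of) tilde Lambda h on [a,b]: the element of tilde C_2^mu with
  tilde delta B = h, for some mu > 1 (unique in L_1 by the paper).\<close>
definition isLambda :: "(real \<Rightarrow> real) \<Rightarrow> real \<Rightarrow> real \<Rightarrow> real
     \<Rightarrow> (real \<Rightarrow> real \<Rightarrow> real \<Rightarrow> real \<Rightarrow> real) \<Rightarrow> (real \<Rightarrow> real \<Rightarrow> real \<Rightarrow> real) \<Rightarrow> bool" where
  "isLambda \<phi> a b \<mu> h B \<longleftrightarrow> 1 < \<mu> \<and> tC2 \<phi> {a..b} \<mu> B \<and>
     (\<forall>t u s. a \<le> s \<longrightarrow> s \<le> u \<longrightarrow> u \<le> t \<longrightarrow> t \<le> b \<longrightarrow> (\<forall>\<xi>>0. tdelta2 B t u s \<xi> = h t u s \<xi>))"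

definition Jint :: "(real \<Rightarrow> real \<Rightarrow> real \<Rightarrow> real^'n) \<Rightarrow> (real \<Rightarrow> real \<Rightarrow> real \<Rightarrow> real^'n^'n)
     \<Rightarrow> (real \<Rightarrow> real^'n) \<Rightarrow> (real \<Rightarrow> real^'n^'n) \<Rightarrow> (real \<Rightarrow> real \<Rightarrow> real \<Rightarrow> real)
     \<Rightarrow> real \<Rightarrow> real \<Rightarrow> real \<Rightarrow> real" where
  "Jint X1 X2 z \<zeta> B t s \<xi> = X1 t s \<xi> \<bullet> z s + mdot (X2 t s \<xi>) (transpose (\<zeta> s)) + B t s \<xi>"

text \<open>N[tilde z; tilde Q^kappa(I)] with the decomposition zeta = z.\<close>
definition QN :: "(real \<Rightarrow> real) \<Rightarrow> (real \<Rightarrow> real \<Rightarrow> real \<Rightarrow> real^'n) \<Rightarrow> real set \<Rightarrow> real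
     \<Rightarrow> (real \<Rightarrow> real \<Rightarrow> real) \<Rightarrow> (real \<Rightarrow> real^'n) \<Rightarrow> ennreal" where
  "QN \<phi> X1 I \<kappa> zt z = tN2 \<phi> I \<kappa> (tdelta1 zt) + pN0 I z + pNhol I \<kappa> z +
     tN2 \<phi> I (2 * \<kappa>) (\<lambda>t s \<xi>. tdelta1 zt t s \<xi> - X1 t s \<xi> \<bullet> z s)"

end

theory Submission
  imports Defs
begin

(* The integral splits into the terms x^1_{ts} z_s and x^2_{ts} . zeta_s^*, which (H) controls
   directly, and the remainder Lambda(H)_{ts}, of which only an a-priori order mu > 1 is known.
   Because e^{-xi(t-u)} is a contraction, the weighted L_1 norm of Lambda(H)_{ts} is subadditive
   under splitting [s,t] at u, up to the norm of H_{tus}; by (H) and the controlledness of z the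
   latter is of order (t-s)^{gamma+2 kappa}, and gamma + 2 kappa > 1.  Halving [s,t] repeatedly
   (the a-priori order mu > 1 makes the leftover vanish) yields the sewing bound of order
   (t-s)^{gamma+2 kappa}.  All excess powers of t - s are finally traded for powers of
   epsilon = b - a <= T, which produces the factors epsilon^{gamma-kappa} and epsilon^{1-kappa}. *)

lemma mdot_eq_inner: "mdot A B = inner A B"
  by (simp add: mdot_def inner_vec_def)

lemma norm_transpose: "norm (transpose A) = norm A" for A :: "real^'n^'m"
proof -
  have "inner (transpose A) (transpose A) = inner A A"
    unfolding inner_vec_def transpose_def by (simp add: sum.swap[of _ "UNIV::'m set"])
  then show ?thesis by (simp add: norm_eq_sqrt_inner)
qed

lemma norm_matrix_vector_mult_le: "norm (A *v x) \<le> norm A * norm x" for A :: "real^'n^'m"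
proof -
  have "norm (A *v x) = L2_set (\<lambda>i. \<bar>inner (A $ i) x\<bar>) UNIV"
    by (simp add: norm_vec_def matrix_vector_mul_component)
  also have "\<dots> \<le> L2_set (\<lambda>i. norm (A $ i) * norm x) UNIV"
    by (intro L2_set_mono Cauchy_Schwarz_ineq2) auto
  also have "\<dots> = norm A * norm x"
    by (simp add: L2_set_left_distrib norm_vec_def)
  finally show ?thesis .
qed

lemma norm_vector_matrix_mult_le: "norm (x v* A) \<le> norm x * norm A" for A :: "real^'n^'m"
  using norm_matrix_vector_mult_le[of "transpose A" x] by (simp add: norm_transpose mult.commute)

lemma abs_mdot_transpose_le: "\<bar>mdot A (transpose B)\<bar> \<le> norm A * norm B" for A B :: "real^'n^'n"
  using Cauchy_Schwarz_ineq2[of A "transpose B"] by (simp add: mdot_eq_inner norm_transpose)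

abbreviation positive_reals :: "real measure" where
  "positive_reals \<equiv> restrict_space lborel {0<..}"

lemma set_borel_measurable_positive_iff:
  "set_borel_measurable lborel {0<..} g \<longleftrightarrow> g \<in> borel_measurable positive_reals"
  for g :: "real \<Rightarrow> 'v::real_normed_vector"
  by (simp add: set_borel_measurable_def borel_measurable_restrict_space_iff)

lemma L1N_positive_reals:
  "L1N \<phi> g = (\<integral>\<^sup>+ \<xi>. ennreal (\<bar>\<phi> \<xi>\<bar> * (1 + \<xi>) * norm (g \<xi>)) \<partial>positive_reals)"
  by (simp add: L1N_def nn_integral_restrict_space)

lemma L1N_mono:
  assumes "\<And>\<xi>. 0 < \<xi> \<Longrightarrow> norm (f \<xi>) \<le> norm (g \<xi>)"
  shows "L1N \<phi> f \<le> L1N \<phi> g"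
  unfolding L1N_positive_reals
  by (intro nn_integral_mono ennreal_leI mult_left_mono) (auto simp: space_restrict_space assms)

lemma L1N_norm [simp]: "L1N \<phi> (\<lambda>\<xi>. norm (g \<xi>)) = L1N \<phi> g"
  by (simp add: L1N_def)

lemma L1N_abs [simp]: "L1N \<phi> (\<lambda>\<xi>. \<bar>g \<xi>\<bar>) = L1N \<phi> g" for g :: "real \<Rightarrow> real"
  by (simp add: L1N_def)

lemma L1N_integrand_measurable:
  fixes g :: "real \<Rightarrow> 'v::{real_normed_vector, second_countable_topology}"
  assumes "set_borel_measurable lborel {0<..} \<phi>" "set_borel_measurable lborel {0<..} g"
  shows "(\<lambda>\<xi>. ennreal (\<bar>\<phi> \<xi>\<bar> * (1 + \<xi>) * norm (g \<xi>))) \<in> borel_measurable positive_reals"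
proof -
  have [measurable]: "(\<lambda>\<xi>. \<xi>) \<in> borel_measurable positive_reals"
    by (intro measurable_restrict_space1) simp
  show ?thesis
    using assms unfolding set_borel_measurable_positive_iff by measurable
qed

lemma L1N_add_le:
  fixes f g :: "real \<Rightarrow> 'v::{real_normed_vector, second_countable_topology}"
  assumes \<phi>: "set_borel_measurable lborel {0<..} \<phi>"
    and f: "set_borel_measurable lborel {0<..} f" and g: "set_borel_measurable lborel {0<..} g"
  shows "L1N \<phi> (\<lambda>\<xi>. f \<xi> + g \<xi>) \<le> L1N \<phi> f + L1N \<phi> g"
proof -
  have "L1N \<phi> (\<lambda>\<xi>. f \<xi> + g \<xi>) \<le> (\<integral>\<^sup>+ \<xi>. ennreal (\<bar>\<phi> \<xi>\<bar> * (1 + \<xi>) * norm (f \<xi>))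
      + ennreal (\<bar>\<phi> \<xi>\<bar> * (1 + \<xi>) * norm (g \<xi>)) \<partial>positive_reals)"
    unfolding L1N_positive_reals
  proof (intro nn_integral_mono)
    fix \<xi> assume "\<xi> \<in> space positive_reals"
    then have \<xi>: "0 < \<xi>" by (simp add: space_restrict_space)
    then have "ennreal (\<bar>\<phi> \<xi>\<bar> * (1 + \<xi>) * norm (f \<xi> + g \<xi>))
        \<le> ennreal (\<bar>\<phi> \<xi>\<bar> * (1 + \<xi>) * norm (f \<xi>) + \<bar>\<phi> \<xi>\<bar> * (1 + \<xi>) * norm (g \<xi>))"
      by (intro ennreal_leI) (simp flip: distrib_left, intro mult_left_mono norm_triangle_ineq, auto)
    also have "\<dots> = ennreal (\<bar>\<phi> \<xi>\<bar> * (1 + \<xi>) * norm (f \<xi>))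
        + ennreal (\<bar>\<phi> \<xi>\<bar> * (1 + \<xi>) * norm (g \<xi>))"
      using \<xi> by (intro ennreal_plus) auto
    finally show "ennreal (\<bar>\<phi> \<xi>\<bar> * (1 + \<xi>) * norm (f \<xi> + g \<xi>))
        \<le> ennreal (\<bar>\<phi> \<xi>\<bar> * (1 + \<xi>) * norm (f \<xi>)) + ennreal (\<bar>\<phi> \<xi>\<bar> * (1 + \<xi>) * norm (g \<xi>))" .
  qed
  also have "\<dots> = L1N \<phi> f + L1N \<phi> g"
    unfolding L1N_positive_reals
    by (intro nn_integral_add L1N_integrand_measurable \<phi> f g)
  finally show ?thesis .
qed

lemma L1N_scale:
  fixes g :: "real \<Rightarrow> real"
  assumes \<phi>: "set_borel_measurable lborel {0<..} \<phi>" and g: "set_borel_measurable lborel {0<..} g"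
    and c: "0 \<le> c"
  shows "L1N \<phi> (\<lambda>\<xi>. c * g \<xi>) = ennreal c * L1N \<phi> g"
proof -
  have "L1N \<phi> (\<lambda>\<xi>. c * g \<xi>) = (\<integral>\<^sup>+ \<xi>. ennreal c * ennreal (\<bar>\<phi> \<xi>\<bar> * (1 + \<xi>) * \<bar>g \<xi>\<bar>) \<partial>positive_reals)"
    unfolding L1N_positive_reals
    by (intro nn_integral_cong) (simp add: space_restrict_space c abs_mult mult_ac flip: ennreal_mult)
  also have "\<dots> = ennreal c * L1N \<phi> g"
    unfolding L1N_positive_reals
    using nn_integral_cmult[OF L1N_integrand_measurable[OF \<phi> g]] by simp
  finally show ?thesis .
qed

lemma L1N_weighted_sum:
  fixes ps :: "(real \<times> (real \<Rightarrow> real) \<times> real) list"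
  assumes \<phi>: "set_borel_measurable lborel {0<..} \<phi>"
    and "\<forall>(c, g, \<beta>) \<in> set ps. 0 \<le> c \<and> 0 \<le> \<beta> \<and> set_borel_measurable lborel {0<..} g
      \<and> L1N \<phi> g \<le> ennreal \<beta>"
  shows "set_borel_measurable lborel {0<..} (\<lambda>\<xi>. \<Sum>(c, g, \<beta>)\<leftarrow>ps. c * \<bar>g \<xi>\<bar>)
    \<and> L1N \<phi> (\<lambda>\<xi>. \<Sum>(c, g, \<beta>)\<leftarrow>ps. c * \<bar>g \<xi>\<bar>) \<le> ennreal (\<Sum>(c, g, \<beta>)\<leftarrow>ps. c * \<beta>)
    \<and> 0 \<le> (\<Sum>(c, g, \<beta>)\<leftarrow>ps. c * \<beta>)"
  using assms(2)
proof (induction ps)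
  case Nil
  then show ?case by (simp add: L1N_def set_borel_measurable_def)
next
  case (Cons p ps)
  obtain c g \<beta> where p: "p = (c, g, \<beta>)" by (cases p)
  have c: "0 \<le> c" and \<beta>: "0 \<le> \<beta>" and g: "set_borel_measurable lborel {0<..} g"
    and g\<beta>: "L1N \<phi> g \<le> ennreal \<beta>"
    using Cons.prems by (auto simp: p)
  define G where "G = (\<lambda>\<xi>. \<Sum>(c, g, \<beta>)\<leftarrow>ps. c * \<bar>g \<xi>\<bar>)"
  have G: "set_borel_measurable lborel {0<..} G" "L1N \<phi> G \<le> ennreal (\<Sum>(c, g, \<beta>)\<leftarrow>ps. c * \<beta>)"
    "0 \<le> (\<Sum>(c, g, \<beta>)\<leftarrow>ps. c * \<beta>)"
    using Cons by (auto simp: G_def)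
  have cg: "set_borel_measurable lborel {0<..} (\<lambda>\<xi>. c * \<bar>g \<xi>\<bar>)"
    using g unfolding set_borel_measurable_positive_iff by measurable
  have "L1N \<phi> (\<lambda>\<xi>. c * \<bar>g \<xi>\<bar> + G \<xi>) \<le> ennreal c * L1N \<phi> (\<lambda>\<xi>. \<bar>g \<xi>\<bar>) + L1N \<phi> G"
    using L1N_add_le[OF \<phi> cg G(1)] L1N_scale[OF \<phi> _ c, of "\<lambda>\<xi>. \<bar>g \<xi>\<bar>"] g
    by (simp add: set_borel_measurable_positive_iff)
  also have "\<dots> \<le> ennreal (c * \<beta>) + ennreal (\<Sum>(c, g, \<beta>)\<leftarrow>ps. c * \<beta>)"
    using g\<beta> G(2) c \<beta> by (auto simp: ennreal_mult intro!: add_mono mult_left_mono)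
  also have "\<dots> = ennreal (c * \<beta> + (\<Sum>(c, g, \<beta>)\<leftarrow>ps. c * \<beta>))"
    using c \<beta> G(3) by simp
  finally show ?case
    using cg G c \<beta> unfolding set_borel_measurable_positive_iff by (simp add: p G_def)
qed

lemma L1N_le_weighted_sum:
  fixes ps :: "(real \<times> (real \<Rightarrow> real) \<times> real) list" and f :: "real \<Rightarrow> 'v::real_normed_vector"
  assumes "set_borel_measurable lborel {0<..} \<phi>"
    and "\<forall>(c, g, \<beta>) \<in> set ps. 0 \<le> c \<and> 0 \<le> \<beta> \<and> set_borel_measurable lborel {0<..} g
      \<and> L1N \<phi> g \<le> ennreal \<beta>"
    and "\<And>\<xi>. 0 < \<xi> \<Longrightarrow> norm (f \<xi>) \<le> (\<Sum>(c, g, \<beta>)\<leftarrow>ps. c * \<bar>g \<xi>\<bar>)"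
  shows "L1N \<phi> f \<le> ennreal (\<Sum>(c, g, \<beta>)\<leftarrow>ps. c * \<beta>)"
proof -
  have "L1N \<phi> f \<le> L1N \<phi> (\<lambda>\<xi>. \<Sum>(c, g, \<beta>)\<leftarrow>ps. c * \<bar>g \<xi>\<bar>)"
    using assms(3) by (intro L1N_mono) (auto intro: order_trans[OF _ abs_ge_self])
  with L1N_weighted_sum[OF assms(1,2)] show ?thesis by auto
qed

lemma ennreal_le_mult_of_divide_le:
  fixes x y :: ennreal
  assumes "0 < p" "x / ennreal p \<le> y"
  shows "x \<le> y * ennreal p"
proof -
  have "x = (x / ennreal p) * ennreal p"
    using assms(1) by (simp add: ennreal_divide_times)
  also have "\<dots> \<le> y * ennreal p"
    using assms(2) by (rule mult_right_mono) simp
  finally show ?thesis .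
qed

lemma le_enn2real_of_ennreal_le: "ennreal x \<le> y \<Longrightarrow> y < \<infinity> \<Longrightarrow> x \<le> enn2real y"
  using enn2real_mono[of "ennreal x" y] by (cases "0 \<le> x") (auto intro: order.trans[OF _ enn2real_nonneg])

lemma tN2_bound:
  assumes "tN2 \<phi> I \<mu> B < \<infinity>" "t \<in> I" "s \<in> I" "s < t"
  shows "L1N \<phi> (B t s) \<le> ennreal (enn2real (tN2 \<phi> I \<mu> B) * (t - s) powr \<mu>)"
proof -
  have "L1N \<phi> (B t s) / ennreal ((t - s) powr \<mu>) \<le> tN2 \<phi> I \<mu> B"
    unfolding tN2_def using assms(2-4) by (intro SUP_upper2[where i="(t, s)"]) auto
  then have "L1N \<phi> (B t s) \<le> ennreal (enn2real (tN2 \<phi> I \<mu> B)) * ennreal ((t - s) powr \<mu>)"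
    using assms(1,4) by (intro ennreal_le_mult_of_divide_le) auto
  then show ?thesis
    by (simp add: ennreal_mult)
qed

lemma tN2_le:
  assumes "\<And>t s. t \<in> I \<Longrightarrow> s \<in> I \<Longrightarrow> s < t \<Longrightarrow> L1N \<phi> (B t s) \<le> ennreal (V * (t - s) powr \<mu>)"
    and "0 \<le> V"
  shows "tN2 \<phi> I \<mu> B \<le> ennreal V"
  unfolding tN2_def using assms
  by (intro SUP_least) (auto intro!: divide_le_posI_ennreal simp: ennreal_mult mult.commute)

lemma pN0_bound:
  assumes "pN0 I z < \<infinity>" "s \<in> I"
  shows "norm (z s) \<le> enn2real (pN0 I z)"
proof -
  have "ennreal (norm (z s)) \<le> pN0 I z"
    unfolding pN0_def using assms(2) by (intro SUP_upper)
  with assms(1) show ?thesis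
    by (simp add: le_enn2real_of_ennreal_le)
qed

lemma pNhol_bound:
  assumes "pNhol I \<mu> z < \<infinity>" "t \<in> I" "s \<in> I" "s < t"
  shows "norm (z t - z s) \<le> enn2real (pNhol I \<mu> z) * (t - s) powr \<mu>"
proof -
  have "ennreal (norm (z t - z s) / (t - s) powr \<mu>) \<le> pNhol I \<mu> z"
    unfolding pNhol_def using assms(2-4) by (intro SUP_upper2[where i="(t, s)"]) auto
  with assms(1) have "norm (z t - z s) / (t - s) powr \<mu> \<le> enn2real (pNhol I \<mu> z)"
    by (simp add: le_enn2real_of_ennreal_le)
  with assms(4) show ?thesis
    by (simp add: divide_le_eq)
qed

lemma pNhol_le:
  assumes "\<And>t s. t \<in> I \<Longrightarrow> s \<in> I \<Longrightarrow> s < t \<Longrightarrow> norm (z t - z s) \<le> V * (t - s) powr \<mu>"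
  shows "pNhol I \<mu> z \<le> ennreal V"
  unfolding pNhol_def using assms
  by (intro SUP_least) (auto intro!: ennreal_leI simp: divide_le_eq)

lemma pN2_bound:
  assumes "pN2 I \<mu> r < \<infinity>" "t \<in> I" "s \<in> I" "s < t"
  shows "norm (r t s) \<le> enn2real (pN2 I \<mu> r) * (t - s) powr \<mu>"
proof -
  have "ennreal (norm (r t s) / (t - s) powr \<mu>) \<le> pN2 I \<mu> r"
    unfolding pN2_def using assms(2-4) by (intro SUP_upper2[where i="(t, s)"]) auto
  with assms(1) have "norm (r t s) / (t - s) powr \<mu> \<le> enn2real (pN2 I \<mu> r)"
    by (simp add: le_enn2real_of_ennreal_le)
  with assms(4) show ?thesis
    by (simp add: divide_le_eq)
qed

lemma norm_weighted_integral_le: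
  fixes g :: "real \<Rightarrow> 'v::{banach, second_countable_topology}"
  assumes "L1N \<phi> g \<le> ennreal V" "0 \<le> V"
  shows "norm (LINT \<xi>:{0<..}|lborel. \<phi> \<xi> *\<^sub>R g \<xi>) \<le> V"
proof (cases "integrable lborel (\<lambda>\<xi>. indicator {0<..} \<xi> *\<^sub>R (\<phi> \<xi> *\<^sub>R g \<xi>))")
  case True
  have "ennreal (norm (LINT \<xi>:{0<..}|lborel. \<phi> \<xi> *\<^sub>R g \<xi>))
      \<le> (\<integral>\<^sup>+ \<xi>. norm (indicator {0<..} \<xi> *\<^sub>R (\<phi> \<xi> *\<^sub>R g \<xi>)) \<partial>lborel)"
    unfolding set_lebesgue_integral_def using True by (rule integral_norm_bound_ennreal)
  also have "\<dots> \<le> L1N \<phi> g"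
    unfolding L1N_def
  proof (intro nn_integral_mono)
    fix \<xi> :: real
    have "\<bar>\<phi> \<xi>\<bar> \<le> \<bar>\<phi> \<xi>\<bar> * (1 + \<xi>)" if "0 < \<xi>"
      using that by (simp add: algebra_simps)
    then show "ennreal (norm (indicator {0<..} \<xi> *\<^sub>R (\<phi> \<xi> *\<^sub>R g \<xi>)))
        \<le> ennreal (\<bar>\<phi> \<xi>\<bar> * (1 + \<xi>) * norm (g \<xi>)) * indicator {0<..} \<xi>"
      by (auto simp: indicator_def intro!: ennreal_leI mult_right_mono)
  qed
  also have "\<dots> \<le> ennreal V"
    by (fact assms(1))
  finally show ?thesis
    using assms(2) by simp
next
  case False
  then show ?thesis
    using assms(2) by (simp add: set_lebesgue_integral_def not_integrable_integral_eq)
qed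

lemma tC3_decomposition:
  fixes h :: "real \<Rightarrow> real \<Rightarrow> real \<Rightarrow> real \<Rightarrow> 'v::real_normed_vector"
  assumes "tC3 \<phi> I \<mu> h"
  obtains k :: nat and hs :: "nat \<Rightarrow> real \<Rightarrow> real \<Rightarrow> real \<Rightarrow> real \<Rightarrow> 'v" and C :: "nat \<Rightarrow> real"
  where "\<And>t u s \<xi>. t \<in> I \<Longrightarrow> u \<in> I \<Longrightarrow> s \<in> I \<Longrightarrow> s \<le> u \<Longrightarrow> u \<le> t \<Longrightarrow> 0 < \<xi> \<Longrightarrow>
      h t u s \<xi> = (\<Sum>i<k. hs i t u s \<xi>)"
    and "\<And>i t u s. i < k \<Longrightarrow> t \<in> I \<Longrightarrow> u \<in> I \<Longrightarrow> s \<in> I \<Longrightarrow> s \<le> u \<Longrightarrow> u \<le> t \<Longrightarrow>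
      set_borel_measurable lborel {0<..} (hs i t u s)"
    and "\<And>i t u s. i < k \<Longrightarrow> t \<in> I \<Longrightarrow> u \<in> I \<Longrightarrow> s \<in> I \<Longrightarrow> s < u \<Longrightarrow> u < t \<Longrightarrow>
      L1N \<phi> (hs i t u s) \<le> ennreal (C i * (t - s) powr \<mu>)"
    and "\<And>i. 0 \<le> C i"
proof -
  have "tN3 \<phi> I \<mu> h < \<infinity>"
    using assms unfolding tC3_def by simp
  then obtain k hs \<rho> where dec: "(\<forall>i<k. 0 < \<rho> i \<and> \<rho> i < \<mu> \<and> cont3 \<phi> I (hs i)) \<and>
    (\<forall>t\<in>I. \<forall>u\<in>I. \<forall>s\<in>I. s \<le> u \<longrightarrow> u \<le> t \<longrightarrow> (\<forall>\<xi>>0. h t u s \<xi> = (\<Sum>i<k. hs i t u s \<xi>)))"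
    and fin: "(\<Sum>i<(k::nat). SUP (t, u, s) \<in> {(t, u, s). t \<in> I \<and> u \<in> I \<and> s \<in> I \<and> s < u \<and> u < t}.
        L1N \<phi> (hs i t u s) / ennreal ((t - u) powr \<rho> i * (u - s) powr (\<mu> - \<rho> i))) < \<infinity>"
    unfolding tN3_def INF_less_iff by auto
  define S where "S i = (SUP (t, u, s) \<in> {(t, u, s). t \<in> I \<and> u \<in> I \<and> s \<in> I \<and> s < u \<and> u < t}.
      L1N \<phi> (hs i t u s) / ennreal ((t - u) powr \<rho> i * (u - s) powr (\<mu> - \<rho> i)))" for i
  have S: "S i < \<infinity>" if "i < k" for i
    using fin that unfolding S_def[symmetric] by (auto simp: ennreal_sum_eq_top top.not_eq_extremum)
  show thesis
  proof (rule that[of hs k "\<lambda>i. enn2real (S i)"])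
    fix i t u s assume i: "i < k" and tus: "t \<in> I" "u \<in> I" "s \<in> I" "s < u" "u < t"
    have "L1N \<phi> (hs i t u s) / ennreal ((t - u) powr \<rho> i * (u - s) powr (\<mu> - \<rho> i)) \<le> S i"
      unfolding S_def using tus by (intro SUP_upper2[where i="(t, u, s)"]) auto
    also have "\<dots> = ennreal (enn2real (S i))"
      using S[OF i] by simp
    finally have "L1N \<phi> (hs i t u s)
        \<le> ennreal (enn2real (S i)) * ennreal ((t - u) powr \<rho> i * (u - s) powr (\<mu> - \<rho> i))"
      using tus by (intro ennreal_le_mult_of_divide_le) auto
    also have "\<dots> \<le> ennreal (enn2real (S i)) * ennreal ((t - s) powr \<rho> i * (t - s) powr (\<mu> - \<rho> i))"
      using tus dec i by (intro mult_left_mono ennreal_leI mult_mono powr_mono2) auto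
    finally show "L1N \<phi> (hs i t u s) \<le> ennreal (enn2real (S i) * (t - s) powr \<mu>)"
      by (simp add: ennreal_mult flip: powr_add)
  next
    fix i t u s assume "i < k" "t \<in> I" "u \<in> I" "s \<in> I" "s \<le> u" "u \<le> t"
    then show "set_borel_measurable lborel {0<..} (hs i t u s)"
      using dec unfolding cont3_def inL1_def by blast
  qed (use dec in auto)
qed

lemma tC3_bound:
  fixes h :: "real \<Rightarrow> real \<Rightarrow> real \<Rightarrow> real \<Rightarrow> 'v::{real_normed_vector, second_countable_topology}"
  assumes \<phi>: "set_borel_measurable lborel {0<..} \<phi>" and h: "tC3 \<phi> I \<mu> h"
  shows "\<exists>C\<ge>0. \<forall>t u s. t \<in> I \<longrightarrow> u \<in> I \<longrightarrow> s \<in> I \<longrightarrow> s < u \<longrightarrow> u < t \<longrightarrow>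
    L1N \<phi> (h t u s) \<le> ennreal (C * (t - s) powr \<mu>)"
proof (rule tC3_decomposition[OF h])
  fix hs :: "nat \<Rightarrow> real \<Rightarrow> real \<Rightarrow> real \<Rightarrow> real \<Rightarrow> 'v" and k :: nat and C :: "nat \<Rightarrow> real"
  assume dec: "\<And>t u s \<xi>. t \<in> I \<Longrightarrow> u \<in> I \<Longrightarrow> s \<in> I \<Longrightarrow> s \<le> u \<Longrightarrow> u \<le> t \<Longrightarrow> 0 < \<xi> \<Longrightarrow>
      h t u s \<xi> = (\<Sum>i<k. hs i t u s \<xi>)"
    and hs: "\<And>i t u s. i < k \<Longrightarrow> t \<in> I \<Longrightarrow> u \<in> I \<Longrightarrow> s \<in> I \<Longrightarrow> s \<le> u \<Longrightarrow> u \<le> t \<Longrightarrow>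
      set_borel_measurable lborel {0<..} (hs i t u s)"
      "\<And>i t u s. i < k \<Longrightarrow> t \<in> I \<Longrightarrow> u \<in> I \<Longrightarrow> s \<in> I \<Longrightarrow> s < u \<Longrightarrow> u < t \<Longrightarrow>
      L1N \<phi> (hs i t u s) \<le> ennreal (C i * (t - s) powr \<mu>)"
    and C: "\<And>i. 0 \<le> C i"
  show ?thesis
  proof (intro exI[of _ "\<Sum>i<k. C i"] conjI allI impI)
    fix t u s assume tus: "t \<in> I" "u \<in> I" "s \<in> I" "s < u" "u < t"
    define ps where "ps = map (\<lambda>i. (1::real, \<lambda>\<xi>. norm (hs i t u s \<xi>), C i * (t - s) powr \<mu>)) [0..<k]"
    have "L1N \<phi> (h t u s) \<le> ennreal (\<Sum>(c, g, \<beta>)\<leftarrow>ps. c * \<beta>)"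
    proof (rule L1N_le_weighted_sum[OF \<phi>])
      show "\<forall>(c, g, \<beta>)\<in>set ps. 0 \<le> c \<and> 0 \<le> \<beta> \<and> set_borel_measurable lborel {0<..} g \<and> L1N \<phi> g \<le> ennreal \<beta>"
        using hs tus C by (auto simp: ps_def set_borel_measurable_positive_iff)
      show "norm (h t u s \<xi>) \<le> (\<Sum>(c, g, \<beta>)\<leftarrow>ps. c * \<bar>g \<xi>\<bar>)" if "0 < \<xi>" for \<xi>
        using dec[of t u s \<xi>] tus that norm_sum[of "\<lambda>i. hs i t u s \<xi>" "{..<k}"]
        by (simp add: ps_def comp_def lessThan_atLeast0 sum_set_upt_conv_sum_list_nat[symmetric])
    qed
    then show "L1N \<phi> (h t u s) \<le> ennreal ((\<Sum>i<k. C i) * (t - s) powr \<mu>)"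
      by (simp add: ps_def comp_def lessThan_atLeast0 sum_distrib_right sum_set_upt_conv_sum_list_nat[symmetric])
  qed (simp add: C sum_nonneg)
qed

lemma powr_half_double: "0 \<le> d \<Longrightarrow> 2 * (d / 2) powr x = 2 powr (1 - x) * d powr x"
  for d x :: real
  by (simp add: powr_divide powr_diff)

lemma dyadic_sewing_iterate:
  fixes M :: "real \<Rightarrow> real \<Rightarrow> real"
  assumes split: "\<And>s t. a \<le> s \<Longrightarrow> s < t \<Longrightarrow> t \<le> b \<Longrightarrow>
      M t s \<le> M t ((s + t) / 2) + M ((s + t) / 2) s + K * (t - s) powr \<theta>"
    and a_priori: "\<And>s t. a \<le> s \<Longrightarrow> s < t \<Longrightarrow> t \<le> b \<Longrightarrow> M t s \<le> N * (t - s) powr \<mu>"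
    and st: "a \<le> s" "s < t" "t \<le> b"
  shows "M t s \<le> N * (t - s) powr \<mu> * (2 powr (1 - \<mu>)) ^ n
    + K * (t - s) powr \<theta> * (\<Sum>k<n. (2 powr (1 - \<theta>)) ^ k)"
  using st
proof (induction n arbitrary: s t)
  case 0
  then show ?case using a_priori by simp
next
  case (Suc n)
  define u where "u = (s + t) / 2"
  have u: "s < u" "u < t" "t - u = (t - s) / 2" "u - s = (t - s) / 2"
    using Suc.prems by (auto simp: u_def field_simps)
  have "M t s \<le> M t u + M u s + K * (t - s) powr \<theta>"
    using split[OF Suc.prems] by (simp add: u_def)
  also have "\<dots> \<le> N * (2 * ((t - s) / 2) powr \<mu>) * (2 powr (1 - \<mu>)) ^ n
      + K * (2 * ((t - s) / 2) powr \<theta>) * (\<Sum>k<n. (2 powr (1 - \<theta>)) ^ k) + K * (t - s) powr \<theta>"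
    using Suc.IH[of u t] Suc.IH[of s u] Suc.prems u by (simp add: algebra_simps)
  also have "\<dots> = N * (t - s) powr \<mu> * (2 powr (1 - \<mu>)) ^ Suc n
      + K * (t - s) powr \<theta> * (1 + 2 powr (1 - \<theta>) * (\<Sum>k<n. (2 powr (1 - \<theta>)) ^ k))"
    using Suc.prems by (simp add: powr_half_double algebra_simps)
  also have "1 + 2 powr (1 - \<theta>) * (\<Sum>k<n. (2 powr (1 - \<theta>)) ^ k) = (\<Sum>k<Suc n. (2 powr (1 - \<theta>)) ^ k)"
    by (subst sum.lessThan_Suc_shift) (simp add: sum_distrib_left)
  finally show ?case .
qed

lemma dyadic_sewing:
  fixes M :: "real \<Rightarrow> real \<Rightarrow> real"
  assumes "1 < \<mu>" "1 < \<theta>" "0 \<le> K"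
    and split: "\<And>s t. a \<le> s \<Longrightarrow> s < t \<Longrightarrow> t \<le> b \<Longrightarrow>
      M t s \<le> M t ((s + t) / 2) + M ((s + t) / 2) s + K * (t - s) powr \<theta>"
    and a_priori: "\<And>s t. a \<le> s \<Longrightarrow> s < t \<Longrightarrow> t \<le> b \<Longrightarrow> M t s \<le> N * (t - s) powr \<mu>"
    and st: "a \<le> s" "s < t" "t \<le> b"
  shows "M t s \<le> K / (1 - 2 powr (1 - \<theta>)) * (t - s) powr \<theta>"
proof -
  define q where "q = 2 powr (1 - \<theta>)"
  have q: "0 < q" "q < 1"
    using assms(2) by (auto simp: q_def intro!: powr_less_one)
  have partial_sums: "(\<Sum>k<n. q ^ k) \<le> 1 / (1 - q)" for n
    using q sum_le_suminf[of "\<lambda>k. q ^ k" "{..<n}"] by (simp add: summable_geometric suminf_geometric)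
  have "M t s \<le> N * (t - s) powr \<mu> * (2 powr (1 - \<mu>)) ^ n + K * (t - s) powr \<theta> * (1 / (1 - q))" for n
  proof -
    have "K * (t - s) powr \<theta> * (\<Sum>k<n. q ^ k) \<le> K * (t - s) powr \<theta> * (1 / (1 - q))"
      using assms(3) partial_sums by (intro mult_left_mono) auto
    then show ?thesis
      using dyadic_sewing_iterate[OF split a_priori st, of n] unfolding q_def by linarith
  qed
  moreover have "(\<lambda>n. N * (t - s) powr \<mu> * (2 powr (1 - \<mu>)) ^ n) \<longlonglongrightarrow> 0"
    using assms(1) by (auto intro!: tendsto_mult_right_zero LIMSEQ_power_zero powr_less_one)
  ultimately have "M t s \<le> 0 + K * (t - s) powr \<theta> * (1 / (1 - q))"
    by (intro LIMSEQ_le_const[OF tendsto_add[OF _ tendsto_const]]) auto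
  then show ?thesis
    by (simp add: q_def)
qed

lemma powr_le_max_one:
  fixes \<delta> T p :: real
  assumes "0 \<le> \<delta>" "\<delta> \<le> T" "0 \<le> p" "p \<le> 1"
  shows "\<delta> powr p \<le> max 1 T"
proof (cases "\<delta> \<le> 1")
  case True
  then have "\<delta> powr p \<le> 1"
    using assms by (intro powr_le1) auto
  then show ?thesis by simp
next
  case False
  then have "\<delta> powr p \<le> \<delta> powr 1"
    using assms by (intro powr_mono) auto
  then show ?thesis
    using False assms by simp
qed

lemma norm_le_tdelta2_split:
  fixes B :: "real \<Rightarrow> real \<Rightarrow> real \<Rightarrow> 'v::real_normed_vector"
  assumes "0 < \<xi>" "u \<le> t"
  shows "norm (B t s \<xi>) \<le> norm (B t u \<xi>) + norm (B u s \<xi>) + norm (tdelta2 B t u s \<xi>)"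
proof -
  have "B t s \<xi> = B t u \<xi> + exp (- \<xi> * (t - u)) *\<^sub>R B u s \<xi> + tdelta2 B t u s \<xi>"
    by (simp add: tdelta2_def)
  moreover have "norm (exp (- \<xi> * (t - u)) *\<^sub>R B u s \<xi>) \<le> norm (B u s \<xi>)"
    using assms by (simp add: mult_left_le_one_le)
  ultimately show ?thesis
    by (metis add_mono norm_triangle_le order_refl)
qed

lemma abs_Hterm_le:
  "\<bar>Hterm X1 X2 X3 f \<zeta> r t u s \<xi>\<bar> \<le> norm (r u s + f u s) * norm (X1 t u \<xi>)
    + norm (\<zeta> u - \<zeta> s) * norm (X2 t u \<xi>) + norm (\<zeta> s) * norm (X3 t u s \<xi>)"
proof -
  have "\<bar>X1 t u \<xi> \<bullet> (r u s + f u s)\<bar> \<le> norm (r u s + f u s) * norm (X1 t u \<xi>)"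
    using Cauchy_Schwarz_ineq2 by (simp add: mult.commute)
  moreover have "\<bar>mdot (X2 t u \<xi>) (transpose (\<zeta> u - \<zeta> s))\<bar> \<le> norm (\<zeta> u - \<zeta> s) * norm (X2 t u \<xi>)"
    using abs_mdot_transpose_le[of "X2 t u \<xi>" "\<zeta> u - \<zeta> s"] by (simp add: mult.commute)
  moreover have "\<bar>mdot (X3 t u s \<xi>) (transpose (\<zeta> s))\<bar> \<le> norm (\<zeta> s) * norm (X3 t u s \<xi>)"
    using abs_mdot_transpose_le[of "X3 t u s \<xi>" "\<zeta> s"] by (simp add: mult.commute)
  ultimately show ?thesis
    unfolding Hterm_def by linarith
qed

lemma abs_Jint_le:
  "\<bar>Jint X1 X2 z \<zeta> B t s \<xi>\<bar> \<le> norm (z s) * norm (X1 t s \<xi>) + norm (\<zeta> s) * norm (X2 t s \<xi>) + \<bar>B t s \<xi>\<bar>"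
  using Cauchy_Schwarz_ineq2[of "X1 t s \<xi>" "z s"] abs_mdot_transpose_le[of "X2 t s \<xi>" "\<zeta> s"]
  unfolding Jint_def by (simp add: mult.commute)

lemma abs_Jint_minus_le:
  "\<bar>Jint X1 X2 z \<zeta> B t s \<xi> - X1 t s \<xi> \<bullet> z s\<bar> \<le> norm (\<zeta> s) * norm (X2 t s \<xi>) + \<bar>B t s \<xi>\<bar>"
  using abs_mdot_transpose_le[of "X2 t s \<xi>" "\<zeta> s"]
  unfolding Jint_def by (simp add: mult.commute)

definition sewing_constant :: "real \<Rightarrow> real \<Rightarrow> real \<Rightarrow> real \<Rightarrow> real \<Rightarrow> real \<Rightarrow> real" where
  "sewing_constant T \<gamma> \<kappa> C1 C2 C3 = (2 * C1 + C2 + C3) / (1 - 2 powr (1 - (\<gamma> + 2 * \<kappa>))) * max 1 T"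

definition estimate_constant :: "real \<Rightarrow> real \<Rightarrow> real \<Rightarrow> real \<Rightarrow> real \<Rightarrow> real \<Rightarrow> real" where
  "estimate_constant T \<gamma> \<kappa> C1 C2 C3 = 1 + max 1 T * (C1 + C2 + sewing_constant T \<gamma> \<kappa> C1 C2 C3)
    + (max 1 T * C2 + sewing_constant T \<gamma> \<kappa> C1 C2 C3) + max 1 T * (2 + C1)"

lemma sewing_constant_nonneg:
  "1 < \<gamma> + 2 * \<kappa> \<Longrightarrow> 0 \<le> C1 \<Longrightarrow> 0 \<le> C2 \<Longrightarrow> 0 \<le> C3 \<Longrightarrow> 0 \<le> sewing_constant T \<gamma> \<kappa> C1 C2 C3"
  unfolding sewing_constant_def by (intro mult_nonneg_nonneg divide_nonneg_pos) (auto intro!: powr_less_one)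

lemma estimate_constant_pos:
  "1 < \<gamma> + 2 * \<kappa> \<Longrightarrow> 0 \<le> C1 \<Longrightarrow> 0 \<le> C2 \<Longrightarrow> 0 \<le> C3 \<Longrightarrow> 0 < estimate_constant T \<gamma> \<kappa> C1 C2 C3"
  using sewing_constant_nonneg[of \<gamma> \<kappa> C1 C2 C3 T] unfolding estimate_constant_def
  by (intro add_pos_nonneg mult_nonneg_nonneg) auto

locale controlled_integral_estimate =
  fixes \<phi> :: "real \<Rightarrow> real" and T \<gamma> \<kappa> a b :: real
    and X1 :: "real \<Rightarrow> real \<Rightarrow> real \<Rightarrow> real^'n"
    and X2 :: "real \<Rightarrow> real \<Rightarrow> real \<Rightarrow> real^'n^'n"
    and X3 :: "real \<Rightarrow> real \<Rightarrow> real \<Rightarrow> real \<Rightarrow> real^'n^'n"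
    and C1 C2 C3 :: real
    and f :: "real \<Rightarrow> real \<Rightarrow> real^'n" and z :: "real \<Rightarrow> real^'n"
    and \<zeta> :: "real \<Rightarrow> real^'n^'n" and r :: "real \<Rightarrow> real \<Rightarrow> real^'n"
    and Z Z\<zeta> H\<zeta> R F :: real
    and \<mu> :: real and B :: "real \<Rightarrow> real \<Rightarrow> real \<Rightarrow> real" and zt :: "real \<Rightarrow> real \<Rightarrow> real"
  assumes phi_measurable: "set_borel_measurable lborel {0<..} \<phi>"
    and exponents: "1/3 < \<kappa>" "\<kappa> < \<gamma>" "\<gamma> < 1/2"
    and interval: "a < b" "b - a \<le> T"
    and X_constants: "0 \<le> C1" "0 \<le> C2" "0 \<le> C3"
    and X1: "\<And>t s. a \<le> s \<Longrightarrow> s \<le> t \<Longrightarrow> t \<le> b \<Longrightarrow> set_borel_measurable lborel {0<..} (X1 t s)"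
      "\<And>t s. a \<le> s \<Longrightarrow> s < t \<Longrightarrow> t \<le> b \<Longrightarrow> L1N \<phi> (X1 t s) \<le> ennreal (C1 * (t - s) powr \<gamma>)"
    and X2: "\<And>t s. a \<le> s \<Longrightarrow> s \<le> t \<Longrightarrow> t \<le> b \<Longrightarrow> set_borel_measurable lborel {0<..} (X2 t s)"
      "\<And>t s. a \<le> s \<Longrightarrow> s < t \<Longrightarrow> t \<le> b \<Longrightarrow> L1N \<phi> (X2 t s) \<le> ennreal (C2 * (t - s) powr (2 * \<gamma>))"
    and X3: "\<And>t u s. a \<le> s \<Longrightarrow> s \<le> u \<Longrightarrow> u \<le> t \<Longrightarrow> t \<le> b \<Longrightarrow>
        set_borel_measurable lborel {0<..} (X3 t u s)"
      "\<And>t u s. a \<le> s \<Longrightarrow> s < u \<Longrightarrow> u < t \<Longrightarrow> t \<le> b \<Longrightarrow>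
        L1N \<phi> (X3 t u s) \<le> ennreal (C3 * (t - s) powr (3 * \<gamma>))"
    and controlled: "\<And>s t. a \<le> s \<Longrightarrow> s \<le> t \<Longrightarrow> t \<le> b \<Longrightarrow>
      z t - z s - f t s = x1_of \<phi> X1 t s v* \<zeta> s + r t s"
    and path_constants: "0 \<le> Z" "0 \<le> Z\<zeta>" "0 \<le> H\<zeta>" "0 \<le> R" "0 \<le> F"
    and z_sup: "\<And>s. a \<le> s \<Longrightarrow> s \<le> b \<Longrightarrow> norm (z s) \<le> Z"
    and \<zeta>_sup: "\<And>s. a \<le> s \<Longrightarrow> s \<le> b \<Longrightarrow> norm (\<zeta> s) \<le> Z\<zeta>"
    and \<zeta>_holder: "\<And>s t. a \<le> s \<Longrightarrow> s < t \<Longrightarrow> t \<le> b \<Longrightarrow> norm (\<zeta> t - \<zeta> s) \<le> H\<zeta> * (t - s) powr \<kappa>"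
    and r_holder: "\<And>s t. a \<le> s \<Longrightarrow> s < t \<Longrightarrow> t \<le> b \<Longrightarrow> norm (r t s) \<le> R * (t - s) powr (2 * \<kappa>)"
    and f_lipschitz: "\<And>s t. a \<le> s \<Longrightarrow> s < t \<Longrightarrow> t \<le> b \<Longrightarrow> norm (f t s) \<le> F * (t - s)"
    and Lambda: "isLambda \<phi> a b \<mu> (Hterm X1 X2 X3 f \<zeta> r) B"
    and increments: "\<And>s t \<xi>. a \<le> s \<Longrightarrow> s \<le> t \<Longrightarrow> t \<le> b \<Longrightarrow> 0 < \<xi> \<Longrightarrow>
      tdelta1 zt t s \<xi> = Jint X1 X2 z \<zeta> B t s \<xi>"
begin

abbreviation "\<epsilon> \<equiv> b - a"

abbreviation "T\<^sub>1 \<equiv> max 1 T"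

abbreviation "\<Lambda> \<equiv> sewing_constant T \<gamma> \<kappa> C1 C2 C3"

text \<open>\<open>Z\<close>, \<open>Z\<zeta>\<close>, \<open>H\<zeta>\<close>, \<open>R\<close>, \<open>F\<close> stand for the norms of \<open>z\<close>, \<open>\<zeta>\<close>, \<open>r\<close> and \<open>f\<close> that enter the right-hand side;
  \<open>data_size\<close> is that right-hand side without the \<open>\<kappa>\<close>-H\<ouml>lder norm of \<open>z\<close>, which is not an
  input of the estimate but one of its outputs (\<open>pNhol_z_le\<close>).\<close>

definition data_size :: real where
  "data_size = Z + \<epsilon> powr (\<gamma> - \<kappa>) * (Z\<zeta> + H\<zeta> + R) + \<epsilon> powr (1 - \<kappa>) * F"

lemma data_size_ge:
  "Z \<le> data_size" "Z\<zeta> * \<epsilon> powr (\<gamma> - \<kappa>) \<le> data_size" "H\<zeta> * \<epsilon> powr (\<gamma> - \<kappa>) \<le> data_size"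
  "R * \<epsilon> powr (\<gamma> - \<kappa>) \<le> data_size" "F * \<epsilon> powr (1 - \<kappa>) \<le> data_size"
  using path_constants unfolding data_size_def
  by (simp_all add: algebra_simps add_increasing add_increasing2)

lemma data_size_nonneg: "0 \<le> data_size"
  using data_size_ge(1) path_constants(1) by simp

lemma le_T\<^sub>1_data_size:
  assumes "0 \<le> y" "y * \<epsilon> powr p \<le> data_size" "0 \<le> p" "p \<le> q" "q - p \<le> 1" "0 < \<delta>" "\<delta> \<le> \<epsilon>"
  shows "y * \<delta> powr q \<le> T\<^sub>1 * data_size"
proof -
  have "y * \<delta> powr q = y * \<delta> powr p * \<delta> powr (q - p)"
    by (simp add: mult.assoc flip: powr_add)
  also have "\<dots> \<le> y * \<epsilon> powr p * T\<^sub>1"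
    using assms interval by (intro mult_mono mult_left_mono powr_mono2 powr_le_max_one) auto
  also have "\<dots> \<le> T\<^sub>1 * data_size"
    using assms(2) by (simp add: mult.commute mult_left_mono)
  finally show ?thesis .
qed

lemma le_T\<^sub>1_data_size':
  "0 \<le> y \<Longrightarrow> y \<le> data_size \<Longrightarrow> 0 \<le> q \<Longrightarrow> q \<le> 1 \<Longrightarrow> 0 < \<delta> \<Longrightarrow> \<delta> \<le> \<epsilon> \<Longrightarrow>
    y * \<delta> powr q \<le> T\<^sub>1 * data_size"
  using le_T\<^sub>1_data_size[of y 0 q \<delta>] interval by simp

lemma norm_x1_le:
  "a \<le> s \<Longrightarrow> s < t \<Longrightarrow> t \<le> b \<Longrightarrow> norm (x1_of \<phi> X1 t s) \<le> C1 * (t - s) powr \<gamma>"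
  unfolding x1_of_def using X1(2) X_constants by (intro norm_weighted_integral_le) auto

lemma norm_z_increment_le:
  assumes "a \<le> s" "s < t" "t \<le> b"
  shows "norm (z t - z s) \<le> F * (t - s) + C1 * Z\<zeta> * (t - s) powr \<gamma> + R * (t - s) powr (2 * \<kappa>)"
proof -
  have "norm (x1_of \<phi> X1 t s v* \<zeta> s) \<le> C1 * (t - s) powr \<gamma> * Z\<zeta>"
    using norm_x1_le[OF assms] \<zeta>_sup[of s] assms X_constants
    by (intro order.trans[OF norm_vector_matrix_mult_le] mult_mono) auto
  moreover have "z t - z s = f t s + x1_of \<phi> X1 t s v* \<zeta> s + r t s"
    using controlled[of s t] assms by (simp add: algebra_simps)
  ultimately show ?thesis
    using f_lipschitz[OF assms] r_holder[OF assms] norm_triangle_ineq[of "f t s" "x1_of \<phi> X1 t s v* \<zeta> s"]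
      norm_triangle_ineq[of "f t s + x1_of \<phi> X1 t s v* \<zeta> s" "r t s"]
    by (simp add: mult_ac)
qed

lemma Hterm_weights_le_powr:
  assumes "a \<le> s" "s < u" "u < t" "t \<le> b"
  shows "norm (r u s + f u s) * (C1 * (t - u) powr \<gamma>) + norm (\<zeta> u - \<zeta> s) * (C2 * (t - u) powr (2 * \<gamma>))
      + norm (\<zeta> s) * (C3 * (t - s) powr (3 * \<gamma>))
    \<le> C1 * (R * (t - s) powr (2 * \<kappa>) + F * (t - s)) * (t - s) powr \<gamma>
      + C2 * (H\<zeta> * (t - s) powr \<kappa>) * (t - s) powr (2 * \<gamma>) + C3 * Z\<zeta> * (t - s) powr (3 * \<gamma>)"
proof -
  note nonneg = path_constants X_constants exponents
  have "norm (r u s + f u s) \<le> R * (u - s) powr (2 * \<kappa>) + F * (u - s)"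
    using r_holder[of s u] f_lipschitz[of s u] norm_triangle_ineq[of "r u s" "f u s"] assms by simp
  also have "\<dots> \<le> R * (t - s) powr (2 * \<kappa>) + F * (t - s)"
    using assms nonneg by (intro add_mono mult_left_mono powr_mono2) auto
  finally have rf: "norm (r u s + f u s) \<le> R * (t - s) powr (2 * \<kappa>) + F * (t - s)" .
  have "norm (\<zeta> u - \<zeta> s) \<le> H\<zeta> * (u - s) powr \<kappa>"
    using \<zeta>_holder assms by simp
  also have "\<dots> \<le> H\<zeta> * (t - s) powr \<kappa>"
    using assms nonneg by (intro mult_left_mono powr_mono2) auto
  finally have \<zeta>H: "norm (\<zeta> u - \<zeta> s) \<le> H\<zeta> * (t - s) powr \<kappa>" .
  have "(t - u) powr \<gamma> \<le> (t - s) powr \<gamma>" "(t - u) powr (2 * \<gamma>) \<le> (t - s) powr (2 * \<gamma>)"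
    using assms nonneg by (auto intro: powr_mono2)
  then have "norm (r u s + f u s) * (t - u) powr \<gamma> \<le> (R * (t - s) powr (2 * \<kappa>) + F * (t - s)) * (t - s) powr \<gamma>"
    and "norm (\<zeta> u - \<zeta> s) * (t - u) powr (2 * \<gamma>) \<le> H\<zeta> * (t - s) powr \<kappa> * (t - s) powr (2 * \<gamma>)"
    and "norm (\<zeta> s) * (t - s) powr (3 * \<gamma>) \<le> Z\<zeta> * (t - s) powr (3 * \<gamma>)"
    using rf \<zeta>H \<zeta>_sup[of s] assms nonneg by (auto intro!: mult_mono)
  then show ?thesis
    using nonneg by (intro add_mono) (simp_all add: mult.left_commute mult.assoc mult_left_mono)
qed

lemma le_scaled_data_size:
  assumes "0 \<le> y" "y * \<epsilon> powr p \<le> data_size" "0 \<le> p" "p \<le> e + \<gamma>" "e + \<gamma> - p \<le> 1" "0 \<le> e"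
    and "0 < \<delta>" "\<delta> \<le> \<epsilon>"
  shows "y * \<delta> powr e \<le> T\<^sub>1 * data_size / \<epsilon> powr \<gamma>"
proof -
  have "y * \<delta> powr e * \<epsilon> powr \<gamma> \<le> y * \<epsilon> powr (e + \<gamma>)"
    using assms by (simp add: powr_add mult_right_mono mult_left_mono powr_mono2 flip: mult.assoc)
  also have "\<dots> \<le> T\<^sub>1 * data_size"
    using assms interval by (intro le_T\<^sub>1_data_size) auto
  finally show ?thesis
    using interval by (simp add: pos_le_divide_eq)
qed

lemma Hterm_weights_le:
  assumes "a \<le> s" "s < u" "u < t" "t \<le> b"
  shows "norm (r u s + f u s) * (C1 * (t - u) powr \<gamma>) + norm (\<zeta> u - \<zeta> s) * (C2 * (t - u) powr (2 * \<gamma>))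
      + norm (\<zeta> s) * (C3 * (t - s) powr (3 * \<gamma>))
    \<le> (2 * C1 + C2 + C3) * (T\<^sub>1 * data_size / \<epsilon> powr \<gamma>) * (t - s) powr (\<gamma> + 2 * \<kappa>)"
proof -
  define \<delta> where "\<delta> = t - s"
  \<comment> \<open>\<open>dyadic_sewing\<close> needs a constant independent of \<open>s\<close> and \<open>t\<close>; the factor \<open>\<epsilon> powr - \<gamma>\<close>
     is paid back in \<open>L1N_B_le\<close> by \<open>(t - s) powr \<gamma> \<le> \<epsilon> powr \<gamma>\<close>.\<close>
  define \<rho> where "\<rho> = T\<^sub>1 * data_size / \<epsilon> powr \<gamma>"
  have \<delta>: "0 < \<delta>" "\<delta> \<le> \<epsilon>"
    using assms by (auto simp: \<delta>_def)
  note nonneg = path_constants X_constants exponents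
  have scaled: "R \<le> \<rho>"
    using le_scaled_data_size[of R "\<gamma> - \<kappa>" 0 \<delta>] nonneg data_size_ge(4) \<delta> by (simp add: \<rho>_def)
  have scaled': "F * \<delta> powr (1 - 2 * \<kappa>) \<le> \<rho>" "H\<zeta> * \<delta> powr (\<gamma> - \<kappa>) \<le> \<rho>"
    "Z\<zeta> * \<delta> powr (2 * \<gamma> - 2 * \<kappa>) \<le> \<rho>"
    unfolding \<rho>_def using nonneg data_size_ge \<delta> by (auto intro!: le_scaled_data_size)
  have "C1 * R + C1 * (F * \<delta> powr (1 - 2 * \<kappa>)) + C2 * (H\<zeta> * \<delta> powr (\<gamma> - \<kappa>))
      + C3 * (Z\<zeta> * \<delta> powr (2 * \<gamma> - 2 * \<kappa>)) \<le> (2 * C1 + C2 + C3) * \<rho>"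
    using mult_left_mono[OF scaled, of C1] mult_left_mono[OF scaled'(1), of C1]
      mult_left_mono[OF scaled'(2), of C2] mult_left_mono[OF scaled'(3), of C3] nonneg
    by (simp add: algebra_simps)
  from mult_right_mono[OF this, of "\<delta> powr (\<gamma> + 2 * \<kappa>)"]
  have "C1 * (R * \<delta> powr (2 * \<kappa>) + F * \<delta>) * \<delta> powr \<gamma> + C2 * (H\<zeta> * \<delta> powr \<kappa>) * \<delta> powr (2 * \<gamma>)
      + C3 * Z\<zeta> * \<delta> powr (3 * \<gamma>) \<le> (2 * C1 + C2 + C3) * \<rho> * \<delta> powr (\<gamma> + 2 * \<kappa>)"
    using \<delta> by (simp add: algebra_simps flip: powr_add) (simp add: powr_add)
  with Hterm_weights_le_powr[OF assms] show ?thesis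
    unfolding \<delta>_def \<rho>_def by linarith
qed

lemma B_integrable:
  assumes "a \<le> s" "s \<le> t" "t \<le> b"
  shows "set_borel_measurable lborel {0<..} (B t s)" "L1N \<phi> (B t s) < \<infinity>"
  using Lambda assms unfolding isLambda_def tC2_def cont2_def inL1_def by auto

lemma L1N_B_le_split:
  assumes "a \<le> s" "s < u" "u < t" "t \<le> b"
  shows "L1N \<phi> (B t s) \<le> ennreal (enn2real (L1N \<phi> (B t u)) + enn2real (L1N \<phi> (B u s))
    + (norm (r u s + f u s) * (C1 * (t - u) powr \<gamma>) + norm (\<zeta> u - \<zeta> s) * (C2 * (t - u) powr (2 * \<gamma>))
      + norm (\<zeta> s) * (C3 * (t - s) powr (3 * \<gamma>))))"
proof -
  define ps where "ps = [(1, \<lambda>\<xi>. B t u \<xi>, enn2real (L1N \<phi> (B t u))),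
    (1, \<lambda>\<xi>. B u s \<xi>, enn2real (L1N \<phi> (B u s))),
    (norm (r u s + f u s), \<lambda>\<xi>. norm (X1 t u \<xi>), C1 * (t - u) powr \<gamma>),
    (norm (\<zeta> u - \<zeta> s), \<lambda>\<xi>. norm (X2 t u \<xi>), C2 * (t - u) powr (2 * \<gamma>)),
    (norm (\<zeta> s), \<lambda>\<xi>. norm (X3 t u s \<xi>), C3 * (t - s) powr (3 * \<gamma>))]"
  have "L1N \<phi> (B t s) \<le> ennreal (\<Sum>(c, g, \<beta>)\<leftarrow>ps. c * \<beta>)"
  proof (rule L1N_le_weighted_sum[OF phi_measurable])
    show "\<forall>(c, g, \<beta>)\<in>set ps. 0 \<le> c \<and> 0 \<le> \<beta> \<and> set_borel_measurable lborel {0<..} g \<and> L1N \<phi> g \<le> ennreal \<beta>"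
      using assms B_integrable[of u t] B_integrable[of s u] X1[of u t] X2[of u t] X3[of s u t] X_constants
      by (auto simp: ps_def set_borel_measurable_positive_iff)
    fix \<xi> :: real assume "0 < \<xi>"
    then have "norm (B t s \<xi>) \<le> \<bar>B t u \<xi>\<bar> + \<bar>B u s \<xi>\<bar> + \<bar>Hterm X1 X2 X3 f \<zeta> r t u s \<xi>\<bar>"
      using norm_le_tdelta2_split[of \<xi> u t B s] Lambda assms by (simp add: isLambda_def)
    then show "norm (B t s \<xi>) \<le> (\<Sum>(c, g, \<beta>)\<leftarrow>ps. c * \<bar>g \<xi>\<bar>)"
      using abs_Hterm_le[of X1 X2 X3 f \<zeta> r t u s \<xi>] by (simp add: ps_def)
  qed
  then show ?thesis
    by (simp add: ps_def add.assoc)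
qed

lemma L1N_B_midpoint_split:
  assumes "a \<le> s" "s < t" "t \<le> b"
  shows "enn2real (L1N \<phi> (B t s)) \<le> enn2real (L1N \<phi> (B t ((s + t) / 2))) + enn2real (L1N \<phi> (B ((s + t) / 2) s))
    + (2 * C1 + C2 + C3) * (T\<^sub>1 * data_size / \<epsilon> powr \<gamma>) * (t - s) powr (\<gamma> + 2 * \<kappa>)"
proof -
  define u where "u = (s + t) / 2"
  have u: "s < u" "u < t"
    using assms by (auto simp: u_def)
  have "L1N \<phi> (B t s) \<le> ennreal (enn2real (L1N \<phi> (B t u)) + enn2real (L1N \<phi> (B u s))
      + (2 * C1 + C2 + C3) * (T\<^sub>1 * data_size / \<epsilon> powr \<gamma>) * (t - s) powr (\<gamma> + 2 * \<kappa>))"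
    using L1N_B_le_split[OF assms(1) u assms(3)] Hterm_weights_le[OF assms(1) u assms(3)]
    by (elim order.trans) (intro ennreal_leI add_left_mono)
  moreover have "L1N \<phi> (B t s) = ennreal (enn2real (L1N \<phi> (B t s)))"
    using B_integrable(2)[of s t] assms by simp
  moreover have "0 \<le> (2 * C1 + C2 + C3) * (T\<^sub>1 * data_size / \<epsilon> powr \<gamma>) * (t - s) powr (\<gamma> + 2 * \<kappa>)"
    using X_constants data_size_nonneg by simp
  ultimately show ?thesis
    unfolding u_def by (metis add_nonneg_nonneg enn2real_nonneg ennreal_le_iff)
qed

lemma Lambda_nonneg: "0 \<le> \<Lambda>"
  using X_constants exponents by (intro sewing_constant_nonneg) auto

lemma L1N_B_le:
  assumes "a \<le> s" "s < t" "t \<le> b"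
  shows "L1N \<phi> (B t s) \<le> ennreal (\<Lambda> * data_size * (t - s) powr (2 * \<kappa>))"
proof -
  define K where "K = (2 * C1 + C2 + C3) * (T\<^sub>1 * data_size / \<epsilon> powr \<gamma>)"
  have a_priori: "enn2real (L1N \<phi> (B t s)) \<le> enn2real (tN2 \<phi> {a..b} \<mu> B) * (t - s) powr \<mu>"
    if "a \<le> s" "s < t" "t \<le> b" for s t
    using tN2_bound[of \<phi> "{a..b}" \<mu> B t s] Lambda that
    by (intro enn2real_leI) (auto simp: isLambda_def tC2_def)
  have "enn2real (L1N \<phi> (B t s)) \<le> K / (1 - 2 powr (1 - (\<gamma> + 2 * \<kappa>))) * (t - s) powr (\<gamma> + 2 * \<kappa>)"
    using exponents X_constants data_size_nonneg Lambda L1N_B_midpoint_split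
    by (intro dyadic_sewing[OF _ _ _ _ a_priori assms]) (auto simp: isLambda_def K_def)
  also have "\<dots> = \<Lambda> * data_size * (t - s) powr (2 * \<kappa>) * ((t - s) powr \<gamma> / \<epsilon> powr \<gamma>)"
    by (simp add: K_def sewing_constant_def powr_add field_simps)
  also have "\<dots> \<le> \<Lambda> * data_size * (t - s) powr (2 * \<kappa>)"
    using assms exponents Lambda_nonneg data_size_nonneg
    by (intro mult_left_le) (auto intro!: powr_mono2 simp: divide_le_eq_1)
  finally have "ennreal (enn2real (L1N \<phi> (B t s))) \<le> ennreal (\<Lambda> * data_size * (t - s) powr (2 * \<kappa>))"
    by (rule ennreal_leI)
  then show ?thesis
    using B_integrable(2)[of s t] assms by simp
qed

lemma L1N_tdelta1_le:
  assumes "a \<le> s" "s < t" "t \<le> b"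
  shows "L1N \<phi> (tdelta1 zt t s)
    \<le> ennreal (Z * (C1 * (t - s) powr \<gamma>) + Z\<zeta> * (C2 * (t - s) powr (2 * \<gamma>)) + \<Lambda> * data_size * (t - s) powr (2 * \<kappa>))"
proof -
  define ps where "ps = [(Z, \<lambda>\<xi>. norm (X1 t s \<xi>), C1 * (t - s) powr \<gamma>),
    (Z\<zeta>, \<lambda>\<xi>. norm (X2 t s \<xi>), C2 * (t - s) powr (2 * \<gamma>)),
    (1, \<lambda>\<xi>. B t s \<xi>, \<Lambda> * data_size * (t - s) powr (2 * \<kappa>))]"
  have "L1N \<phi> (tdelta1 zt t s) \<le> ennreal (\<Sum>(c, g, \<beta>)\<leftarrow>ps. c * \<beta>)"
  proof (rule L1N_le_weighted_sum[OF phi_measurable])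
    show "\<forall>(c, g, \<beta>)\<in>set ps. 0 \<le> c \<and> 0 \<le> \<beta> \<and> set_borel_measurable lborel {0<..} g \<and> L1N \<phi> g \<le> ennreal \<beta>"
      using assms X1[of s t] X2[of s t] B_integrable[of s t] L1N_B_le[OF assms] X_constants path_constants
        Lambda_nonneg data_size_nonneg
      by (auto simp: ps_def set_borel_measurable_positive_iff)
    show "norm (tdelta1 zt t s \<xi>) \<le> (\<Sum>(c, g, \<beta>)\<leftarrow>ps. c * \<bar>g \<xi>\<bar>)" if "0 < \<xi>" for \<xi>
    proof -
      have "norm (z s) * norm (X1 t s \<xi>) \<le> Z * norm (X1 t s \<xi>)"
        and "norm (\<zeta> s) * norm (X2 t s \<xi>) \<le> Z\<zeta> * norm (X2 t s \<xi>)"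
        using z_sup[of s] \<zeta>_sup[of s] assms by (auto intro: mult_right_mono)
      then show ?thesis
        using abs_Jint_le[of X1 X2 z \<zeta> B t s \<xi>] increments[of s t \<xi>] assms that by (simp add: ps_def)
    qed
  qed
  then show ?thesis
    by (simp add: ps_def add.assoc)
qed

lemma tdelta1_weights_le:
  assumes "0 < \<delta>" "\<delta> \<le> \<epsilon>"
  shows "Z * (C1 * \<delta> powr \<gamma>) + Z\<zeta> * (C2 * \<delta> powr (2 * \<gamma>)) + \<Lambda> * data_size * \<delta> powr (2 * \<kappa>)
    \<le> T\<^sub>1 * (C1 + C2 + \<Lambda>) * data_size * \<delta> powr \<kappa>"
proof -
  note nonneg = path_constants X_constants exponents Lambda_nonneg data_size_nonneg
  have small: "Z * \<delta> powr (\<gamma> - \<kappa>) \<le> T\<^sub>1 * data_size" "data_size * \<delta> powr \<kappa> \<le> T\<^sub>1 * data_size"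
    using nonneg data_size_ge assms by (auto intro!: le_T\<^sub>1_data_size')
  have small': "Z\<zeta> * \<delta> powr (2 * \<gamma> - \<kappa>) \<le> T\<^sub>1 * data_size"
    using nonneg data_size_ge assms by (auto intro!: le_T\<^sub>1_data_size)
  have "Z * (C1 * \<delta> powr \<gamma>) + Z\<zeta> * (C2 * \<delta> powr (2 * \<gamma>)) + \<Lambda> * data_size * \<delta> powr (2 * \<kappa>)
      = \<delta> powr \<kappa> * (C1 * (Z * \<delta> powr (\<gamma> - \<kappa>)) + C2 * (Z\<zeta> * \<delta> powr (2 * \<gamma> - \<kappa>))
        + \<Lambda> * (data_size * \<delta> powr \<kappa>))"
    by (simp add: algebra_simps flip: powr_add)
  also have "\<dots> \<le> \<delta> powr \<kappa> * ((C1 + C2 + \<Lambda>) * (T\<^sub>1 * data_size))"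
    using small small' nonneg unfolding distrib_right by (intro mult_left_mono add_mono) auto
  finally show ?thesis
    by (simp add: algebra_simps)
qed

lemma tN2_tdelta1_le: "tN2 \<phi> {a..b} \<kappa> (tdelta1 zt) \<le> ennreal (T\<^sub>1 * (C1 + C2 + \<Lambda>) * data_size)"
proof (rule tN2_le)
  fix t s assume "t \<in> {a..b}" "s \<in> {a..b}" "s < t"
  then have st: "a \<le> s" "s < t" "t \<le> b" by auto
  show "L1N \<phi> (tdelta1 zt t s) \<le> ennreal (T\<^sub>1 * (C1 + C2 + \<Lambda>) * data_size * (t - s) powr \<kappa>)"
    using L1N_tdelta1_le[OF st] tdelta1_weights_le[of "t - s"] st by (auto elim!: order.trans intro: ennreal_leI)
qed (use X_constants Lambda_nonneg data_size_nonneg in simp)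

lemma L1N_remainder_le:
  assumes "a \<le> s" "s < t" "t \<le> b"
  shows "L1N \<phi> (\<lambda>\<xi>. tdelta1 zt t s \<xi> - X1 t s \<xi> \<bullet> z s)
    \<le> ennreal (Z\<zeta> * (C2 * (t - s) powr (2 * \<gamma>)) + \<Lambda> * data_size * (t - s) powr (2 * \<kappa>))"
proof -
  define ps where "ps = [(Z\<zeta>, \<lambda>\<xi>. norm (X2 t s \<xi>), C2 * (t - s) powr (2 * \<gamma>)),
    (1, \<lambda>\<xi>. B t s \<xi>, \<Lambda> * data_size * (t - s) powr (2 * \<kappa>))]"
  have "L1N \<phi> (\<lambda>\<xi>. tdelta1 zt t s \<xi> - X1 t s \<xi> \<bullet> z s) \<le> ennreal (\<Sum>(c, g, \<beta>)\<leftarrow>ps. c * \<beta>)"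
  proof (rule L1N_le_weighted_sum[OF phi_measurable])
    show "\<forall>(c, g, \<beta>)\<in>set ps. 0 \<le> c \<and> 0 \<le> \<beta> \<and> set_borel_measurable lborel {0<..} g \<and> L1N \<phi> g \<le> ennreal \<beta>"
      using assms X2[of s t] B_integrable[of s t] L1N_B_le[OF assms] X_constants path_constants
        Lambda_nonneg data_size_nonneg
      by (auto simp: ps_def set_borel_measurable_positive_iff)
    show "norm (tdelta1 zt t s \<xi> - X1 t s \<xi> \<bullet> z s) \<le> (\<Sum>(c, g, \<beta>)\<leftarrow>ps. c * \<bar>g \<xi>\<bar>)" if "0 < \<xi>" for \<xi>
    proof -
      have "norm (\<zeta> s) * norm (X2 t s \<xi>) \<le> Z\<zeta> * norm (X2 t s \<xi>)"
        using \<zeta>_sup[of s] assms by (auto intro: mult_right_mono)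
      then show ?thesis
        using abs_Jint_minus_le[of X1 X2 z \<zeta> B t s \<xi>] increments[of s t \<xi>] assms that by (simp add: ps_def)
    qed
  qed
  then show ?thesis
    by (simp add: ps_def)
qed

lemma remainder_weights_le:
  assumes "0 < \<delta>" "\<delta> \<le> \<epsilon>"
  shows "Z\<zeta> * (C2 * \<delta> powr (2 * \<gamma>)) + \<Lambda> * data_size * \<delta> powr (2 * \<kappa>)
    \<le> (T\<^sub>1 * C2 + \<Lambda>) * data_size * \<delta> powr (2 * \<kappa>)"
proof -
  have "Z\<zeta> * \<delta> powr (2 * \<gamma> - 2 * \<kappa>) \<le> T\<^sub>1 * data_size"
    using path_constants exponents data_size_ge assms by (intro le_T\<^sub>1_data_size[of _ "\<gamma> - \<kappa>"]) auto
  then have "C2 * (Z\<zeta> * \<delta> powr (2 * \<gamma> - 2 * \<kappa>)) * \<delta> powr (2 * \<kappa>) \<le> C2 * (T\<^sub>1 * data_size) * \<delta> powr (2 * \<kappa>)"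
    using X_constants by (intro mult_left_mono mult_right_mono) auto
  then show ?thesis
    by (simp add: algebra_simps flip: powr_add)
qed

lemma tN2_remainder_le:
  "tN2 \<phi> {a..b} (2 * \<kappa>) (\<lambda>t s \<xi>. tdelta1 zt t s \<xi> - X1 t s \<xi> \<bullet> z s)
    \<le> ennreal ((T\<^sub>1 * C2 + \<Lambda>) * data_size)"
proof (rule tN2_le)
  fix t s assume "t \<in> {a..b}" "s \<in> {a..b}" "s < t"
  then have st: "a \<le> s" "s < t" "t \<le> b" by auto
  show "L1N \<phi> (\<lambda>\<xi>. tdelta1 zt t s \<xi> - X1 t s \<xi> \<bullet> z s) \<le> ennreal ((T\<^sub>1 * C2 + \<Lambda>) * data_size * (t - s) powr (2 * \<kappa>))"
    using L1N_remainder_le[OF st] remainder_weights_le[of "t - s"] st by (auto elim!: order.trans intro: ennreal_leI)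
qed (use X_constants Lambda_nonneg data_size_nonneg in simp)

lemma increment_weights_le:
  assumes "0 < \<delta>" "\<delta> \<le> \<epsilon>"
  shows "F * \<delta> + C1 * Z\<zeta> * \<delta> powr \<gamma> + R * \<delta> powr (2 * \<kappa>) \<le> T\<^sub>1 * (2 + C1) * data_size * \<delta> powr \<kappa>"
proof -
  note nonneg = path_constants X_constants exponents data_size_nonneg
  have small: "F * \<delta> powr (1 - \<kappa>) \<le> T\<^sub>1 * data_size" "Z\<zeta> * \<delta> powr (\<gamma> - \<kappa>) \<le> T\<^sub>1 * data_size"
    "R * \<delta> powr \<kappa> \<le> T\<^sub>1 * data_size"
    using nonneg data_size_ge assms by (auto intro!: le_T\<^sub>1_data_size)
  have "F * \<delta> + C1 * Z\<zeta> * \<delta> powr \<gamma> + R * \<delta> powr (2 * \<kappa>)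
      = \<delta> powr \<kappa> * (F * \<delta> powr (1 - \<kappa>) + C1 * (Z\<zeta> * \<delta> powr (\<gamma> - \<kappa>)) + R * \<delta> powr \<kappa>)"
    using assms by (simp add: algebra_simps flip: powr_add)
  also have "\<dots> \<le> \<delta> powr \<kappa> * (T\<^sub>1 * data_size + C1 * (T\<^sub>1 * data_size) + T\<^sub>1 * data_size)"
    using small nonneg by (intro mult_left_mono add_mono) auto
  finally show ?thesis
    by (simp add: algebra_simps)
qed

lemma pNhol_z_le: "pNhol {a..b} \<kappa> z \<le> ennreal (T\<^sub>1 * (2 + C1) * data_size)"
proof (rule pNhol_le)
  fix t s assume "t \<in> {a..b}" "s \<in> {a..b}" "s < t"
  then show "norm (z t - z s) \<le> T\<^sub>1 * (2 + C1) * data_size * (t - s) powr \<kappa>"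
    using norm_z_increment_le[of s t] increment_weights_le[of "t - s"] by auto
qed

lemma pN0_z_le: "pN0 {a..b} z \<le> ennreal data_size"
  unfolding pN0_def using z_sup data_size_ge(1) by (intro SUP_least ennreal_leI) (auto intro: order.trans)

lemma QN_le: "QN \<phi> X1 {a..b} \<kappa> zt z \<le> ennreal (estimate_constant T \<gamma> \<kappa> C1 C2 C3 * data_size)"
proof -
  have "QN \<phi> X1 {a..b} \<kappa> zt z \<le> ennreal (T\<^sub>1 * (C1 + C2 + \<Lambda>) * data_size) + ennreal data_size
      + ennreal (T\<^sub>1 * (2 + C1) * data_size) + ennreal ((T\<^sub>1 * C2 + \<Lambda>) * data_size)"
    unfolding QN_def using tN2_tdelta1_le pN0_z_le pNhol_z_le tN2_remainder_le by (intro add_mono)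
  also have "\<dots> = ennreal (estimate_constant T \<gamma> \<kappa> C1 C2 C3 * data_size)"
    using X_constants Lambda_nonneg data_size_nonneg
    by (simp add: estimate_constant_def algebra_simps flip: ennreal_plus)
  finally show ?thesis .
qed

end

definition hypH_bounds :: "(real \<Rightarrow> real) \<Rightarrow> real \<Rightarrow> real \<Rightarrow> (real \<Rightarrow> real \<Rightarrow> real \<Rightarrow> real^'n)
     \<Rightarrow> (real \<Rightarrow> real \<Rightarrow> real \<Rightarrow> real^'n^'n) \<Rightarrow> (real \<Rightarrow> real \<Rightarrow> real \<Rightarrow> real \<Rightarrow> real^'n^'n)
     \<Rightarrow> real \<Rightarrow> real \<Rightarrow> real \<Rightarrow> bool" where
  "hypH_bounds \<phi> T \<gamma> X1 X2 X3 C1 C2 C3 \<longleftrightarrow> 0 \<le> C1 \<and> 0 \<le> C2 \<and> 0 \<le> C3 \<and>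
     (\<forall>t s. 0 \<le> s \<longrightarrow> s \<le> t \<longrightarrow> t \<le> T \<longrightarrow>
        set_borel_measurable lborel {0<..} (X1 t s) \<and> set_borel_measurable lborel {0<..} (X2 t s)) \<and>
     (\<forall>t s. 0 \<le> s \<longrightarrow> s < t \<longrightarrow> t \<le> T \<longrightarrow>
        L1N \<phi> (X1 t s) \<le> ennreal (C1 * (t - s) powr \<gamma>) \<and> L1N \<phi> (X2 t s) \<le> ennreal (C2 * (t - s) powr (2 * \<gamma>))) \<and>
     (\<forall>t u s. 0 \<le> s \<longrightarrow> s \<le> u \<longrightarrow> u \<le> t \<longrightarrow> t \<le> T \<longrightarrow> set_borel_measurable lborel {0<..} (X3 t u s)) \<and>
     (\<forall>t u s. 0 \<le> s \<longrightarrow> s < u \<longrightarrow> u < t \<longrightarrow> t \<le> T \<longrightarrow>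
        L1N \<phi> (X3 t u s) \<le> ennreal (C3 * (t - s) powr (3 * \<gamma>)))"

lemma hypH_bounds_exist:
  assumes \<phi>: "set_borel_measurable lborel {0<..} \<phi>" and H: "hypH \<phi> T \<gamma> X1 X2 X3"
  shows "\<exists>C1 C2 C3. hypH_bounds \<phi> T \<gamma> X1 X2 X3 C1 C2 C3"
proof -
  have X: "tC2 \<phi> {0..T} \<gamma> X1" "tC2 \<phi> {0..T} (2 * \<gamma>) X2" "tC3 \<phi> {0..T} (3 * \<gamma>) X3"
    using H unfolding hypH_def by auto
  obtain C3 where "0 \<le> C3" and X3: "\<forall>t u s. t \<in> {0..T} \<longrightarrow> u \<in> {0..T} \<longrightarrow> s \<in> {0..T} \<longrightarrow>
      s < u \<longrightarrow> u < t \<longrightarrow> L1N \<phi> (X3 t u s) \<le> ennreal (C3 * (t - s) powr (3 * \<gamma>))"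
    using tC3_bound[OF \<phi> X(3)] by blast
  have "hypH_bounds \<phi> T \<gamma> X1 X2 X3 (enn2real (tN2 \<phi> {0..T} \<gamma> X1)) (enn2real (tN2 \<phi> {0..T} (2 * \<gamma>) X2)) C3"
    unfolding hypH_bounds_def
    using X X3 \<open>0 \<le> C3\<close> by (auto intro!: tN2_bound simp: tC2_def tC3_def cont2_def cont3_def inL1_def)
  then show ?thesis
    by blast
qed

lemma QN_le_estimate_finite:
  fixes X1 :: "real \<Rightarrow> real \<Rightarrow> real \<Rightarrow> real^'n"
    and X2 :: "real \<Rightarrow> real \<Rightarrow> real \<Rightarrow> real^'n^'n"
    and X3 :: "real \<Rightarrow> real \<Rightarrow> real \<Rightarrow> real \<Rightarrow> real^'n^'n"
  assumes \<phi>: "set_borel_measurable lborel {0<..} \<phi>"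
    and exponents: "1/3 < \<kappa>" "\<kappa> < \<gamma>" "\<gamma> < 1/2"
    and bounds: "hypH_bounds \<phi> T \<gamma> X1 X2 X3 C1 C2 C3"
    and ab: "0 \<le> a" "a < b" "b \<le> T"
    and f: "pN2 {a..b} 1 f < \<infinity>"
    and z: "inA \<phi> X1 a b \<kappa> \<gamma> f h z \<zeta> r" "pN0 {a..b} z < \<infinity>" "MA a b \<kappa> z \<zeta> r < \<infinity>"
    and B: "isLambda \<phi> a b \<mu> (Hterm X1 X2 X3 f \<zeta> r) B"
    and zt: "\<forall>s t. a \<le> s \<longrightarrow> s \<le> t \<longrightarrow> t \<le> b \<longrightarrow> (\<forall>\<xi>>0. tdelta1 zt t s \<xi> = Jint X1 X2 z \<zeta> B t s \<xi>)"
  shows "QN \<phi> X1 {a..b} \<kappa> zt z \<le> ennreal (estimate_constant T \<gamma> \<kappa> C1 C2 C3)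
    * (pN0 {a..b} z + ennreal ((b - a) powr (\<gamma> - \<kappa>)) * MA a b \<kappa> z \<zeta> r
       + ennreal ((b - a) powr (1 - \<kappa>)) * pN2 {a..b} 1 f)"
proof -
  have fin: "pN0 {a..b} \<zeta> < \<infinity>" "pNhol {a..b} \<kappa> \<zeta> < \<infinity>" "pN2 {a..b} (2 * \<kappa>) r < \<infinity>"
    "pNhol {a..b} \<kappa> z < \<infinity>"
    using z(3) by (auto simp: MA_def top.not_eq_extremum)
  interpret controlled_integral_estimate \<phi> T \<gamma> \<kappa> a b X1 X2 X3 C1 C2 C3 f z \<zeta> r
    "enn2real (pN0 {a..b} z)" "enn2real (pN0 {a..b} \<zeta>)" "enn2real (pNhol {a..b} \<kappa> \<zeta>)"
    "enn2real (pN2 {a..b} (2 * \<kappa>) r)" "enn2real (pN2 {a..b} 1 f)" \<mu> B zt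
    using \<phi> exponents bounds ab B zt z(1) pN0_bound[OF z(2)] pN0_bound[OF fin(1)]
      pNhol_bound[OF fin(2)] pN2_bound[OF fin(3)] pN2_bound[OF f]
    by unfold_locales (auto simp: inA_def hypH_bounds_def)
  define Y where "Y = enn2real (pN0 {a..b} z) + (b - a) powr (\<gamma> - \<kappa>) * (enn2real (pN0 {a..b} \<zeta>)
    + enn2real (pNhol {a..b} \<kappa> \<zeta>) + enn2real (pN2 {a..b} (2 * \<kappa>) r) + enn2real (pNhol {a..b} \<kappa> z))
    + (b - a) powr (1 - \<kappa>) * enn2real (pN2 {a..b} 1 f)"
  have D: "0 < estimate_constant T \<gamma> \<kappa> C1 C2 C3"
    using exponents X_constants by (intro estimate_constant_pos) auto
  have "data_size \<le> Y"
    unfolding data_size_def Y_def by (simp add: add.assoc[symmetric] mult_left_mono)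
  have "QN \<phi> X1 {a..b} \<kappa> zt z \<le> ennreal (estimate_constant T \<gamma> \<kappa> C1 C2 C3 * data_size)"
    by (fact QN_le)
  also have "\<dots> \<le> ennreal (estimate_constant T \<gamma> \<kappa> C1 C2 C3) * ennreal Y"
    using D \<open>data_size \<le> Y\<close> data_size_nonneg by (simp add: ennreal_leI mult_left_mono flip: ennreal_mult)
  also have "ennreal Y = pN0 {a..b} z + ennreal ((b - a) powr (\<gamma> - \<kappa>)) * MA a b \<kappa> z \<zeta> r
       + ennreal ((b - a) powr (1 - \<kappa>)) * pN2 {a..b} 1 f"
    using z(2) f fin by (simp add: Y_def MA_def ennreal_mult ennreal_plus)
  finally show ?thesis .
qed

lemma QN_le_estimate:
  fixes X1 :: "real \<Rightarrow> real \<Rightarrow> real \<Rightarrow> real^'n"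
    and X2 :: "real \<Rightarrow> real \<Rightarrow> real \<Rightarrow> real^'n^'n"
    and X3 :: "real \<Rightarrow> real \<Rightarrow> real \<Rightarrow> real \<Rightarrow> real^'n^'n"
  assumes "set_borel_measurable lborel {0<..} \<phi>" "1/3 < \<kappa>" "\<kappa> < \<gamma>" "\<gamma> < 1/2"
    and "hypH_bounds \<phi> T \<gamma> X1 X2 X3 C1 C2 C3"
    and ab: "0 \<le> a" "a < b" "b \<le> T"
    and "pN2 {a..b} 1 f < \<infinity>" "inA \<phi> X1 a b \<kappa> \<gamma> f h z \<zeta> r"
    and "isLambda \<phi> a b \<mu> (Hterm X1 X2 X3 f \<zeta> r) B"
    and "\<forall>s t. a \<le> s \<longrightarrow> s \<le> t \<longrightarrow> t \<le> b \<longrightarrow> (\<forall>\<xi>>0. tdelta1 zt t s \<xi> = Jint X1 X2 z \<zeta> B t s \<xi>)"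
  shows "QN \<phi> X1 {a..b} \<kappa> zt z \<le> ennreal (estimate_constant T \<gamma> \<kappa> C1 C2 C3)
    * (pN0 {a..b} z + ennreal ((b - a) powr (\<gamma> - \<kappa>)) * MA a b \<kappa> z \<zeta> r
       + ennreal ((b - a) powr (1 - \<kappa>)) * pN2 {a..b} 1 f)"
proof (cases "pN0 {a..b} z \<noteq> \<infinity> \<and> MA a b \<kappa> z \<zeta> r \<noteq> \<infinity>")
  case True
  with assms show ?thesis
    by (intro QN_le_estimate_finite) (auto simp: top.not_eq_extremum)
next
  case False
  then have infinite: "pN0 {a..b} z + ennreal ((b - a) powr (\<gamma> - \<kappa>)) * MA a b \<kappa> z \<zeta> r
      + ennreal ((b - a) powr (1 - \<kappa>)) * pN2 {a..b} 1 f = \<infinity>"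
    using ab by (auto simp: ennreal_mult_eq_top_iff)
  have "0 < estimate_constant T \<gamma> \<kappa> C1 C2 C3"
    using assms by (intro estimate_constant_pos) (auto simp: hypH_bounds_def)
  then show ?thesis
    unfolding infinite by (simp add: ennreal_mult_top)
qed

theorem proposition4p14:
  fixes \<phi> :: "real \<Rightarrow> real" and T \<gamma> \<kappa> :: real
    and X1 :: "real \<Rightarrow> real \<Rightarrow> real \<Rightarrow> real^'n"
    and X2 :: "real \<Rightarrow> real \<Rightarrow> real \<Rightarrow> real^'n^'n"
    and X3 :: "real \<Rightarrow> real \<Rightarrow> real \<Rightarrow> real \<Rightarrow> real^'n^'n"
  assumes "set_borel_measurable lborel {0<..} \<phi>"
    and "0 < T"
    and "1/3 < \<kappa>" and "\<kappa> < \<gamma>" and "\<gamma> < 1/2"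
    and "hypH \<phi> T \<gamma> X1 X2 X3"
  shows "\<exists>c>0. \<forall>(a::real) (b::real) (f::real \<Rightarrow> real \<Rightarrow> real^'n) (h::real^'n) (z::real \<Rightarrow> real^'n)
             (\<zeta>::real \<Rightarrow> real^'n^'n) (r::real \<Rightarrow> real \<Rightarrow> real^'n) (ht::real \<Rightarrow> real)
             (zt::real \<Rightarrow> real \<Rightarrow> real) (\<mu>::real) (B::real \<Rightarrow> real \<Rightarrow> real \<Rightarrow> real).
     0 \<le> a \<longrightarrow> a < b \<longrightarrow> b \<le> T \<longrightarrow>
     pN2 {a..b} 1 f < \<infinity> \<longrightarrow>
     inA \<phi> X1 a b \<kappa> \<gamma> f h z \<zeta> r \<longrightarrow>
     isLambda \<phi> a b \<mu> (Hterm X1 X2 X3 f \<zeta> r) B \<longrightarrow>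
     inL1 \<phi> ht \<longrightarrow> zt a = ht \<longrightarrow>
     (\<forall>s t. a \<le> s \<longrightarrow> s \<le> t \<longrightarrow> t \<le> b \<longrightarrow>
        (\<forall>\<xi>>0. tdelta1 zt t s \<xi> = Jint X1 X2 z \<zeta> B t s \<xi>)) \<longrightarrow>
     QN \<phi> X1 {a..b} \<kappa> zt z
       \<le> ennreal c * (pN0 {a..b} z + ennreal ((b - a) powr (\<gamma> - \<kappa>)) * MA a b \<kappa> z \<zeta> r
                       + ennreal ((b - a) powr (1 - \<kappa>)) * pN2 {a..b} 1 f)"
proof -
  obtain C1 C2 C3 where bounds: "hypH_bounds \<phi> T \<gamma> X1 X2 X3 C1 C2 C3"
    using hypH_bounds_exist[OF assms(1,6)] by blast
  have "0 < estimate_constant T \<gamma> \<kappa> C1 C2 C3"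
    using assms(3,4) bounds by (intro estimate_constant_pos) (auto simp: hypH_bounds_def)
  with QN_le_estimate[OF assms(1,3-5) bounds] show ?thesis
    by blast
qed

end
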